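(* Let $X$ be a complex Banach space and $T: X \to X$ a bounded linear operator, with Banach-space adjoint $T^*: X^* \to X^*$. Assume that for every non-empty relatively open subset $U \subseteq \sigma(T)$, the glocal spectral subspace $\mathcal{X}_T(\overline{U})$ is dense in $X$. Then $\mathcal{X}^*_{T^*}(F) = \{0\}$ for every closed set $F \subsetneq \sigma(T^* )$. Moreover: (i) if $\sigma(T^* )$ is not a singleton, then the point spectrum $\sigma_p(T^* )$ is empty; (ii) $T^*$ has Dunford's property $(C)$; (iii) $\sigma_{T^*}(x) = \sigma(T^* )$ for every $x \in X^* \setminus \{0\}$; (iv) $r_{T^*}(x) = r(T^* )$ for every $x \in X^*\setminus\{0\}$; (v) if $M$ is any non-trivial closed $T^*$-invariant subspace of $X^*$, then $\sigma(T^* ) \subseteq \sigma(T^*|_M) \subseteq \eta(\sigma(T^* ))$.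
   Context: For a bounded operator $T$ on a Banach space $X$: $T$ has the single-valued extension property (SVEP) if for every open $U \subseteq \mathbb{C}$ and every analytic $f: U \to X$ with $(T - zI)f(z) = 0$ for all $z \in U$, one has $f \equiv 0$. The local resolvent set $\rho_T(x)$ of $x \in X$ is the union of all open $U \subseteq \mathbb{C}$ on which there is an analytic $f: U\to X$ with $(T-zI)f(z) = x$ for $z\in U$; the local spectrum is $\sigma_T(x) = \mathbb{C}\setminus \rho_T(x)$. For $F \subseteq \mathbb{C}$, the local spectral subspace is $X_T(F) = \{x \in X : \sigma_T(x) \subseteq F\}$. $T$ has Dunford's property $(C)$ if $X_T(F)$ is closed for every closed $F \subseteq \mathbb{C}$. For closed $F \subseteq \mathbb{C}$, the glocal spectral subspace $\mathcal{X}_T(F)$ is the set of $x \in X$ for which there exists an analytic $f: \mathbb{C}\setminus F \to X$ with $(T - zI)f(z) = x$ for all $z \in \mathbb{C}\setminus F$ (for $T^*$ on $X^*$ this is denoted $\mathcal{X}^*_{T^*}(F)$). The local spectral radius is $r_T(x) = \limsup_{n\to\infty}\|T^n x\|^{1/n}$; $r(T)$ is the spectral radius. The full spectrum $\eta(\sigma(T))$ is the union of $\sigma(T)$ with all bounded connected components of $\mathbb{C}\setminus\sigma(T)$. *)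

theory Defs
  imports "HOL-Analysis.Analysis"
begin

text \<open>HOL-Analysis has only real normed spaces.  A complex Banach space is a real
Banach space together with a complex scalar multiplication compatible with the
real one and with the norm.\<close>

class complex_banach = banach +
  fixes scaleC :: "complex \<Rightarrow> 'a \<Rightarrow> 'a"
  assumes scaleC_add_right: "scaleC a (x + y) = scaleC a x + scaleC a y"
    and scaleC_add_left: "scaleC (a + b) x = scaleC a x + scaleC b x"
    and scaleC_scaleC: "scaleC a (scaleC b x) = scaleC (a * b) x"
    and scaleC_of_real: "scaleC (of_real r) x = scaleR r x"
    and norm_scaleC: "norm (scaleC a x) = cmod a * norm x"

definition bounded_clinear_op :: "('a::complex_banach \<Rightarrow> 'a) \<Rightarrow> bool" where
  "bounded_clinear_op T \<longleftrightarrow> bounded_linear T \<and> (\<forall>c x. T (scaleC c x) = scaleC c (T x))"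

definition op_spectrum :: "('a::complex_banach \<Rightarrow> 'a) \<Rightarrow> complex set" where
  "op_spectrum T = {z. \<not> (\<exists>S. bounded_linear S \<and>
       (\<forall>x. S (T x - scaleC z x) = x) \<and> (\<forall>x. T (S x) - scaleC z (S x) = x))}"

definition X_analytic_on :: "(complex \<Rightarrow> 'a::complex_banach) \<Rightarrow> complex set \<Rightarrow> bool" where
  "X_analytic_on f U \<longleftrightarrow> open U \<and>
     (\<forall>z\<in>U. \<exists>g. ((\<lambda>w. scaleC (inverse (w - z)) (f w - f z)) \<longlongrightarrow> g) (at z))"

definition glocal_subspace :: "('a::complex_banach \<Rightarrow> 'a) \<Rightarrow> complex set \<Rightarrow> 'a set" where
  "glocal_subspace T F = {x. \<exists>f. X_analytic_on f (- F) \<and>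
       (\<forall>z\<in>- F. T (f z) - scaleC z (f z) = x)}"

definition cdual :: "('a::complex_banach \<Rightarrow> complex) set" where
  "cdual = {\<phi>. bounded_linear \<phi> \<and> (\<forall>c x. \<phi> (scaleC c x) = c * \<phi> x)}"

definition dnorm :: "('a::complex_banach \<Rightarrow> complex) \<Rightarrow> real" where
  "dnorm \<phi> = onorm \<phi>"

definition adj :: "('a::complex_banach \<Rightarrow> 'a) \<Rightarrow> ('a \<Rightarrow> complex) \<Rightarrow> ('a \<Rightarrow> complex)" where
  "adj T \<phi> = (\<lambda>x. \<phi> (T x))"

definition dshift :: "(('a \<Rightarrow> complex) \<Rightarrow> ('a \<Rightarrow> complex)) \<Rightarrow> complex \<Rightarrow> ('a \<Rightarrow> complex) \<Rightarrow> ('a \<Rightarrow> complex)" where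
  "dshift A z \<phi> = (\<lambda>x. A \<phi> x - z * \<phi> x)"

definition dspectrum_on ::
  "('a::complex_banach \<Rightarrow> complex) set \<Rightarrow> (('a \<Rightarrow> complex) \<Rightarrow> ('a \<Rightarrow> complex)) \<Rightarrow> complex set" where
  "dspectrum_on V A = {z. \<not> (\<exists>S. (\<forall>\<phi>\<in>V. S \<phi> \<in> V) \<and>
       (\<exists>K. \<forall>\<phi>\<in>V. dnorm (S \<phi>) \<le> K * dnorm \<phi>) \<and>
       (\<forall>\<phi>\<in>V. S (dshift A z \<phi>) = \<phi>) \<and> (\<forall>\<phi>\<in>V. dshift A z (S \<phi>) = \<phi>))}"

definition adj_spectrum :: "('a::complex_banach \<Rightarrow> 'a) \<Rightarrow> complex set" where
  "adj_spectrum T = dspectrum_on cdual (adj T)"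

definition adj_point_spectrum :: "('a::complex_banach \<Rightarrow> 'a) \<Rightarrow> complex set" where
  "adj_point_spectrum T = {z. \<exists>\<phi>\<in>cdual. \<phi> \<noteq> (\<lambda>x. 0) \<and> dshift (adj T) z \<phi> = (\<lambda>x. 0)}"

definition dual_analytic_on :: "(complex \<Rightarrow> ('a::complex_banach \<Rightarrow> complex)) \<Rightarrow> complex set \<Rightarrow> bool" where
  "dual_analytic_on f U \<longleftrightarrow> open U \<and> (\<forall>z\<in>U. f z \<in> cdual) \<and>
     (\<forall>z\<in>U. \<exists>g\<in>cdual.
        ((\<lambda>w. dnorm (\<lambda>x. (f w x - f z x) / (w - z) - g x)) \<longlongrightarrow> 0) (at z))"

definition adj_local_resolvent :: "('a::complex_banach \<Rightarrow> 'a) \<Rightarrow> ('a \<Rightarrow> complex) \<Rightarrow> complex set" where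
  "adj_local_resolvent T \<phi> = \<Union>{U. \<exists>f. dual_analytic_on f U \<and>
       (\<forall>z\<in>U. dshift (adj T) z (f z) = \<phi>)}"

definition adj_local_spectrum :: "('a::complex_banach \<Rightarrow> 'a) \<Rightarrow> ('a \<Rightarrow> complex) \<Rightarrow> complex set" where
  "adj_local_spectrum T \<phi> = - adj_local_resolvent T \<phi>"

definition adj_local_subspace :: "('a::complex_banach \<Rightarrow> 'a) \<Rightarrow> complex set \<Rightarrow> ('a \<Rightarrow> complex) set" where
  "adj_local_subspace T F = {\<phi>\<in>cdual. adj_local_spectrum T \<phi> \<subseteq> F}"

definition adj_glocal_subspace :: "('a::complex_banach \<Rightarrow> 'a) \<Rightarrow> complex set \<Rightarrow> ('a \<Rightarrow> complex) set" where
  "adj_glocal_subspace T F = {\<phi>\<in>cdual. \<exists>f. dual_analytic_on f (- F) \<and>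
       (\<forall>z\<in>- F. dshift (adj T) z (f z) = \<phi>)}"

definition dclosed :: "('a::complex_banach \<Rightarrow> complex) set \<Rightarrow> bool" where
  "dclosed M \<longleftrightarrow> M \<subseteq> cdual \<and>
     (\<forall>s \<phi>. (\<forall>n. s n \<in> M) \<longrightarrow> \<phi> \<in> cdual \<longrightarrow>
        ((\<lambda>n. dnorm (\<lambda>x. s n x - \<phi> x)) \<longlonglongrightarrow> 0) \<longrightarrow> \<phi> \<in> M)"

definition adj_property_C :: "('a::complex_banach \<Rightarrow> 'a) \<Rightarrow> bool" where
  "adj_property_C T \<longleftrightarrow> (\<forall>F. closed F \<longrightarrow> dclosed (adj_local_subspace T F))"

definition dsubspace :: "('a::complex_banach \<Rightarrow> complex) set \<Rightarrow> bool" where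
  "dsubspace M \<longleftrightarrow> M \<subseteq> cdual \<and> (\<lambda>x. 0) \<in> M \<and>
     (\<forall>\<phi>\<in>M. \<forall>\<psi>\<in>M. (\<lambda>x. \<phi> x + \<psi> x) \<in> M) \<and> (\<forall>c. \<forall>\<phi>\<in>M. (\<lambda>x. c * \<phi> x) \<in> M)"

definition adj_local_spectral_radius :: "('a::complex_banach \<Rightarrow> 'a) \<Rightarrow> ('a \<Rightarrow> complex) \<Rightarrow> ereal" where
  "adj_local_spectral_radius T \<phi> = limsup (\<lambda>n. ereal (root n (dnorm ((adj T ^^ n) \<phi>))))"

definition adj_spectral_radius :: "('a::complex_banach \<Rightarrow> 'a) \<Rightarrow> real" where
  "adj_spectral_radius T = Sup (cmod ` adj_spectrum T)"

definition full_spectrum :: "complex set \<Rightarrow> complex set" where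
  "full_spectrum K = K \<union> \<Union>{C. C \<in> components (- K) \<and> bounded C}"

end

theory Submission
  imports Defs "HOL-Complex_Analysis.Complex_Analysis"
begin

text \<open>The heart of the proof is an annihilation principle.  Let \<open>\<phi> \<in> X*\<close> have an analytic
\<open>T*\<close>-resolvent \<open>g\<close> off a closed set \<open>F\<close>, and let \<open>\<mu> \<in> \<sigma>(T) - F\<close>.  Take a small relatively open
piece \<open>U\<close> of \<open>\<sigma>(T)\<close> around \<open>\<mu>\<close> whose closure misses \<open>F\<close>.  For \<open>x\<close> in the glocal subspace of
\<open>closure U\<close>, with \<open>(T - z) f(z) = x\<close> off \<open>closure U\<close>, the scalar functions \<open>g(z)(x)\<close> and
\<open>\<phi>(f(z))\<close> agree where both are defined and glue to an entire function vanishing at infinity.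
By Liouville, \<open>g(z)\<close> annihilates a dense set of vectors, so \<open>\<phi> = (T* - \<mu>) g(\<mu>) = 0\<close>.

Applied with \<open>F = {z}\<close>, the principle kills eigenvectors and gives SVEP for \<open>T*\<close>; hence local
resolvents glue to a solution off the local spectrum of \<open>\<phi>\<close>, which therefore is all of \<open>\<sigma>(T*)\<close>
when \<open>\<phi> \<noteq> 0\<close>.  This gives (C) and the statement on invariant subspaces \<open>M\<close>, where the upper bound uses that every
point of \<open>\<sigma>(T*|M) - \<sigma>(T*)\<close> is interior to \<open>\<sigma>(T*|M)\<close>.  For the local spectral radius, the
series \<open>- \<Sigma> z\<^sup>-\<^sup>n\<^sup>-\<^sup>1 T*\<^sup>n \<phi>\<close> is a local resolvent beyond \<open>limsup \<parallel>T*\<^sup>n \<phi>\<parallel>\<^sup>1\<^sup>/\<^sup>n\<close>, and conversely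
Cauchy estimates for the resolvent in the variable \<open>1/z\<close> bound \<open>\<parallel>T*\<^sup>n \<phi>\<parallel>\<close> by \<open>\<rho>\<^sup>n\<^sup>+\<^sup>1\<close> for every
\<open>\<rho> > r(T*)\<close>.\<close>

lemma scaleC_zero_right [simp]: "scaleC c (0::'a::complex_banach) = 0"
  using scaleC_add_right[of c "0::'a" 0] by simp

lemma scaleC_minus_right: "scaleC c (- x) = - scaleC c (x::'a::complex_banach)"
proof -
  have "scaleC c x + scaleC c (- x) = 0" using scaleC_add_right[of c x "-x"] by simp
  then show ?thesis by (rule minus_unique[symmetric])
qed

lemma scaleC_diff_right: "scaleC c (x - y) = scaleC c x - scaleC c (y::'a::complex_banach)"
  using scaleC_add_right[of c x "-y"] by (simp add: scaleC_minus_right)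

lemma scaleC_commute: "scaleC a (scaleC b x) = scaleC b (scaleC a (x::'a::complex_banach))"
  by (simp add: scaleC_scaleC mult.commute)

lemma bounded_clinear_op_bounded_linear: "bounded_clinear_op T \<Longrightarrow> bounded_linear T"
  by (simp add: bounded_clinear_op_def)

lemma bounded_clinear_op_scaleC: "bounded_clinear_op T \<Longrightarrow> T (scaleC c x) = scaleC c (T x)"
  by (simp add: bounded_clinear_op_def)

lemma bounded_clinear_op_norm_le: "bounded_clinear_op T \<Longrightarrow> norm (T x) \<le> onorm T * norm x"
  using bounded_clinear_op_bounded_linear onorm by blast

lemma bounded_clinear_op_onorm_nonneg: "bounded_clinear_op T \<Longrightarrow> 0 \<le> onorm T"
  using bounded_clinear_op_bounded_linear onorm_pos_le by blast

lemma norm_shift_solution_le: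
  assumes T: "bounded_clinear_op T" and eq: "T y - scaleC z y = x" and z: "onorm T < cmod z"
  shows "norm y \<le> norm x / (cmod z - onorm T)"
proof -
  have "cmod z * norm y = norm (scaleC z y)" by (simp add: norm_scaleC)
  also have "\<dots> \<le> norm x + norm (T y)"
    by (metis eq add.commute norm_minus_commute diff_add_cancel norm_triangle_sub)
  finally have "(cmod z - onorm T) * norm y \<le> norm x"
    using bounded_clinear_op_norm_le[OF T, of y] by (simp add: algebra_simps)
  then show ?thesis using z by (simp add: field_simps)
qed

section \<open>The dual space\<close>

lemma cdual_bounded_linear: "\<phi> \<in> cdual \<Longrightarrow> bounded_linear \<phi>"
  by (simp add: cdual_def)

lemma cdual_scaleC: "\<phi> \<in> cdual \<Longrightarrow> \<phi> (scaleC c x) = c * \<phi> x"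
  by (simp add: cdual_def)

lemma cdual_add: "\<phi> \<in> cdual \<Longrightarrow> \<phi> (x + y) = \<phi> x + \<phi> y"
  using cdual_bounded_linear linear_add bounded_linear.linear by blast

lemma cdual_diff: "\<phi> \<in> cdual \<Longrightarrow> \<phi> (x - y) = \<phi> x - \<phi> y"
  using cdual_bounded_linear linear_diff bounded_linear.linear by blast

lemma cdual_norm_le: "\<phi> \<in> cdual \<Longrightarrow> cmod (\<phi> x) \<le> dnorm \<phi> * norm x"
  unfolding dnorm_def using cdual_bounded_linear onorm by blast

lemma dnorm_nonneg: "\<phi> \<in> cdual \<Longrightarrow> 0 \<le> dnorm \<phi>"
  unfolding dnorm_def using cdual_bounded_linear onorm_pos_le by blast

lemma dnorm_le: "0 \<le> B \<Longrightarrow> (\<And>x. cmod (\<phi> x) \<le> B * norm x) \<Longrightarrow> dnorm \<phi> \<le> B"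
  unfolding dnorm_def by (rule onorm_bound)

lemma cdualI:
  assumes "\<And>x y. \<phi> (x + y) = \<phi> x + \<phi> y" "\<And>c x. \<phi> (scaleC c x) = c * \<phi> x"
    "\<And>x. cmod (\<phi> x) \<le> K * norm x"
  shows "\<phi> \<in> cdual"
proof -
  have "bounded_linear \<phi>"
  proof (rule bounded_linear_intro[where K=K])
    show "\<phi> (scaleR r x) = scaleR r (\<phi> x)" for r x
      using assms(2)[of "of_real r" x] by (simp add: scaleC_of_real scaleR_conv_of_real)
    show "cmod (\<phi> x) \<le> norm x * K" for x using assms(3)[of x] by (simp add: mult.commute)
  qed (use assms in auto)
  then show ?thesis using assms(2) by (simp add: cdual_def)
qed

lemma cdual_zero [simp]: "(\<lambda>x. 0) \<in> cdual"
  by (rule cdualI[where K=0]) simp_all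

lemma dnorm_eq_0_iff:
  assumes "\<phi> \<in> cdual" shows "dnorm \<phi> = 0 \<longleftrightarrow> \<phi> = (\<lambda>x. 0)"
proof
  assume "dnorm \<phi> = 0"
  then have "cmod (\<phi> x) \<le> 0" for x using cdual_norm_le[OF assms, of x] by simp
  then show "\<phi> = (\<lambda>x. 0)" by (simp add: fun_eq_iff)
next
  assume z: "\<phi> = (\<lambda>x. 0)"
  have "dnorm \<phi> \<le> 0" by (rule dnorm_le) (simp_all add: z)
  then show "dnorm \<phi> = 0" using dnorm_nonneg[OF assms] by linarith
qed

lemma cdual_add_norm_le:
  "\<phi> \<in> cdual \<Longrightarrow> \<psi> \<in> cdual \<Longrightarrow> cmod (\<phi> x + \<psi> x) \<le> (dnorm \<phi> + dnorm \<psi>) * norm x"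
  by (rule order_trans[OF norm_triangle_ineq]) (simp add: distrib_right add_mono cdual_norm_le)

lemma cdual_diff_norm_le:
  "\<phi> \<in> cdual \<Longrightarrow> \<psi> \<in> cdual \<Longrightarrow> cmod (\<phi> x - \<psi> x) \<le> (dnorm \<phi> + dnorm \<psi>) * norm x"
  by (rule order_trans[OF norm_triangle_ineq4]) (simp add: distrib_right add_mono cdual_norm_le)

lemma cdual_mult_norm_le: "\<phi> \<in> cdual \<Longrightarrow> cmod (c * \<phi> x) \<le> (cmod c * dnorm \<phi>) * norm x"
  by (simp add: norm_mult mult.assoc mult_left_mono cdual_norm_le)

lemma cdual_plus: "\<phi> \<in> cdual \<Longrightarrow> \<psi> \<in> cdual \<Longrightarrow> (\<lambda>x. \<phi> x + \<psi> x) \<in> cdual"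
  by (rule cdualI[where K="dnorm \<phi> + dnorm \<psi>"])
    (simp_all add: cdual_add cdual_scaleC distrib_left cdual_add_norm_le)

lemma cdual_minus: "\<phi> \<in> cdual \<Longrightarrow> \<psi> \<in> cdual \<Longrightarrow> (\<lambda>x. \<phi> x - \<psi> x) \<in> cdual"
  by (rule cdualI[where K="dnorm \<phi> + dnorm \<psi>"])
    (simp_all add: cdual_add cdual_scaleC right_diff_distrib cdual_diff_norm_le)

lemma cdual_mult: "\<phi> \<in> cdual \<Longrightarrow> (\<lambda>x. c * \<phi> x) \<in> cdual"
  by (rule cdualI[where K="cmod c * dnorm \<phi>"])
    (simp_all add: cdual_add cdual_scaleC distrib_left cdual_mult_norm_le)

lemma dnorm_mult_le: "\<phi> \<in> cdual \<Longrightarrow> dnorm (\<lambda>x. c * \<phi> x) \<le> cmod c * dnorm \<phi>"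
  by (rule dnorm_le) (simp_all add: dnorm_nonneg cdual_mult_norm_le)

lemma dnorm_add_le: "\<phi> \<in> cdual \<Longrightarrow> \<psi> \<in> cdual \<Longrightarrow> dnorm (\<lambda>x. \<phi> x + \<psi> x) \<le> dnorm \<phi> + dnorm \<psi>"
  by (rule dnorm_le) (simp_all add: dnorm_nonneg cdual_add_norm_le)

lemma dnorm_diff_le: "\<phi> \<in> cdual \<Longrightarrow> \<psi> \<in> cdual \<Longrightarrow> dnorm (\<lambda>x. \<phi> x - \<psi> x) \<le> dnorm \<phi> + dnorm \<psi>"
  by (rule dnorm_le) (simp_all add: dnorm_nonneg cdual_diff_norm_le)

lemma dnorm_minus_commute: "dnorm (\<lambda>x. \<phi> x - \<psi> x) = dnorm (\<lambda>x. \<psi> x - \<phi> x)"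
  unfolding dnorm_def onorm_def by (simp only: norm_minus_commute)

lemma dnorm_uminus: "\<phi> \<in> cdual \<Longrightarrow> dnorm (\<lambda>x. - \<phi> x) = dnorm \<phi>"
  using dnorm_minus_commute[of "\<lambda>x. 0" \<phi>] by simp

lemma cdual_difference_quotient:
  "a \<in> cdual \<Longrightarrow> b \<in> cdual \<Longrightarrow> c \<in> cdual \<Longrightarrow> (\<lambda>y. (a y - b y) / d - c y) \<in> cdual"
  using cdual_minus[OF cdual_mult[OF cdual_minus[of a b]], of c "inverse d"]
  by (simp add: divide_inverse mult.commute)

lemma cdual_comp:
  assumes S: "bounded_linear S" "\<And>c x. S (scaleC c x) = scaleC c (S x)" and \<phi>: "\<phi> \<in> cdual"
  shows "(\<lambda>x. \<phi> (S x)) \<in> cdual" "dnorm (\<lambda>x. \<phi> (S x)) \<le> onorm S * dnorm \<phi>"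
proof -
  have bound: "cmod (\<phi> (S x)) \<le> onorm S * dnorm \<phi> * norm x" for x
  proof -
    have "cmod (\<phi> (S x)) \<le> dnorm \<phi> * norm (S x)" by (rule cdual_norm_le[OF \<phi>])
    also have "\<dots> \<le> dnorm \<phi> * (onorm S * norm x)"
      by (rule mult_left_mono[OF onorm[OF S(1)] dnorm_nonneg[OF \<phi>]])
    finally show ?thesis by (simp add: algebra_simps)
  qed
  have "S (x + y) = S x + S y" for x y
    using S(1) linear_add bounded_linear.linear by blast
  then show "(\<lambda>x. \<phi> (S x)) \<in> cdual"
    by (intro cdualI[OF _ _ bound]) (simp_all add: cdual_add[OF \<phi>] cdual_scaleC[OF \<phi>] S(2))
  show "dnorm (\<lambda>x. \<phi> (S x)) \<le> onorm S * dnorm \<phi>"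
    by (rule dnorm_le[OF _ bound]) (simp add: onorm_pos_le[OF S(1)] dnorm_nonneg[OF \<phi>])
qed

lemma cdual_adj: "bounded_clinear_op T \<Longrightarrow> \<phi> \<in> cdual \<Longrightarrow> adj T \<phi> \<in> cdual"
  unfolding adj_def bounded_clinear_op_def using cdual_comp(1) by blast

lemma dnorm_adj_le: "bounded_clinear_op T \<Longrightarrow> \<phi> \<in> cdual \<Longrightarrow> dnorm (adj T \<phi>) \<le> onorm T * dnorm \<phi>"
  unfolding adj_def bounded_clinear_op_def using cdual_comp(2) by blast

lemma dshift_apply: "dshift (adj T) z \<phi> x = \<phi> (T x) - z * \<phi> x"
  by (simp add: dshift_def adj_def)

lemma dshift_zero [simp]: "dshift (adj T) z (\<lambda>x. 0) = (\<lambda>x. 0)"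
  by (simp add: dshift_def adj_def)

lemma dshift_diff: "dshift (adj T) w (\<lambda>x. a x - b x) = (\<lambda>x. dshift (adj T) w a x - dshift (adj T) w b x)"
  by (simp add: dshift_def adj_def algebra_simps)

lemma dshift_plus: "dshift (adj T) w (\<lambda>x. a x + b x) = (\<lambda>x. dshift (adj T) w a x + dshift (adj T) w b x)"
  by (simp add: dshift_def adj_def algebra_simps)

lemma dshift_mult: "dshift (adj T) w (\<lambda>x. c * a x) = (\<lambda>x. c * dshift (adj T) w a x)"
  by (simp add: dshift_def adj_def algebra_simps)

lemma dshift_change: "dshift (adj T) w a = (\<lambda>x. dshift (adj T) z a x - (w - z) * a x)"
  by (simp add: dshift_def adj_def algebra_simps)

lemma dshift_pairing:
  "\<phi> \<in> cdual \<Longrightarrow> dshift (adj T) z \<phi> y = \<phi> (T y - scaleC z y)"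
  by (simp add: dshift_apply cdual_diff cdual_scaleC)

section \<open>Analytic vector-valued functions\<close>

lemma X_analytic_on_pairing_holomorphic:
  assumes f: "X_analytic_on f U" and \<phi>: "\<phi> \<in> cdual"
  shows "(\<lambda>z. \<phi> (f z)) holomorphic_on U"
proof -
  have U: "open U" using f by (simp add: X_analytic_on_def)
  show ?thesis unfolding holomorphic_on_open[OF U]
  proof
    fix z assume z: "z \<in> U"
    then obtain g where g: "((\<lambda>w. scaleC (inverse (w - z)) (f w - f z)) \<longlongrightarrow> g) (at z)"
      using f by (auto simp: X_analytic_on_def)
    have "((\<lambda>w. \<phi> (scaleC (inverse (w - z)) (f w - f z))) \<longlongrightarrow> \<phi> g) (at z)"
      by (rule bounded_linear.tendsto[OF cdual_bounded_linear[OF \<phi>] g])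
    then have "((\<lambda>w. (\<phi> (f w) - \<phi> (f z)) / (w - z)) \<longlongrightarrow> \<phi> g) (at z)"
      by (simp add: cdual_scaleC[OF \<phi>] cdual_diff[OF \<phi>] divide_inverse mult.commute)
    then show "\<exists>f'. ((\<lambda>z. \<phi> (f z)) has_field_derivative f') (at z)"
      by (auto simp: has_field_derivative_iff)
  qed
qed

lemma dual_analytic_onE:
  assumes "dual_analytic_on f U" "z \<in> U"
  obtains G where "G \<in> cdual"
    "((\<lambda>w. dnorm (\<lambda>x. (f w x - f z x) / (w - z) - G x)) \<longlongrightarrow> 0) (at z)"
  using assms by (auto simp: dual_analytic_on_def)

lemma dual_analytic_on_open: "dual_analytic_on f U \<Longrightarrow> open U"
  by (simp add: dual_analytic_on_def)

lemma dual_analytic_on_cdual: "dual_analytic_on f U \<Longrightarrow> z \<in> U \<Longrightarrow> f z \<in> cdual"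
  by (simp add: dual_analytic_on_def)

lemma dual_analytic_on_subset:
  "dual_analytic_on f U \<Longrightarrow> V \<subseteq> U \<Longrightarrow> open V \<Longrightarrow> dual_analytic_on f V"
  unfolding dual_analytic_on_def by blast

lemma dual_analytic_onI_quotient_bound:
  assumes U: "open U" and inc: "\<And>z. z \<in> U \<Longrightarrow> f z \<in> cdual"
    and bound: "\<And>z. z \<in> U \<Longrightarrow> \<exists>G\<in>cdual. \<exists>C. eventually
        (\<lambda>w. dnorm (\<lambda>x. (f w x - f z x) / (w - z) - G x) \<le> C * cmod (w - z)) (at z)"
  shows "dual_analytic_on f U"
  unfolding dual_analytic_on_def
proof (intro conjI ballI)
  fix z assume z: "z \<in> U"
  obtain G C where G: "G \<in> cdual"
    and ev: "eventually (\<lambda>w. dnorm (\<lambda>x. (f w x - f z x) / (w - z) - G x) \<le> C * cmod (w - z)) (at z)"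
    using bound[OF z] by blast
  have "((\<lambda>w. dnorm (\<lambda>x. (f w x - f z x) / (w - z) - G x)) \<longlongrightarrow> 0) (at z)"
  proof (rule tendsto_sandwich[where f="\<lambda>w. 0" and h="\<lambda>w. C * cmod (w - z)"])
    show "\<forall>\<^sub>F w in at z. 0 \<le> dnorm (\<lambda>x. (f w x - f z x) / (w - z) - G x)"
      by (rule eventually_mono[OF eventually_at_in_open[OF U z]])
        (auto intro!: dnorm_nonneg cdual_difference_quotient inc G z)
    have "((\<lambda>w. cmod (w - z)) \<longlongrightarrow> 0) (at z)"
      by (intro tendsto_norm_zero LIM_zero tendsto_ident_at)
    then show "((\<lambda>w. C * cmod (w - z)) \<longlongrightarrow> 0) (at z)" by (rule tendsto_mult_right_zero)
  qed (use ev in simp_all)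
  with G show "\<exists>G\<in>cdual. ((\<lambda>w. dnorm (\<lambda>x. (f w x - f z x) / (w - z) - G x)) \<longlongrightarrow> 0) (at z)"
    by blast
qed (use U inc in auto)

lemma dual_analytic_on_eval_holomorphic:
  assumes g: "dual_analytic_on g U"
  shows "(\<lambda>z. g z x) holomorphic_on U"
  unfolding holomorphic_on_open[OF dual_analytic_on_open[OF g]]
proof
  fix z assume z: "z \<in> U"
  obtain G where G: "G \<in> cdual"
    and lim: "((\<lambda>w. dnorm (\<lambda>y. (g w y - g z y) / (w - z) - G y)) \<longlongrightarrow> 0) (at z)"
    using dual_analytic_onE[OF g z] by blast
  have "eventually (\<lambda>w. norm ((g w x - g z x) / (w - z) - G x)
            \<le> dnorm (\<lambda>y. (g w y - g z y) / (w - z) - G y) * norm x) (at z)"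
    using eventually_at_in_open'[OF dual_analytic_on_open[OF g] z]
    by eventually_elim
      (use cdual_difference_quotient dual_analytic_on_cdual[OF g] z G cdual_norm_le in blast)
  then have "((\<lambda>w. (g w x - g z x) / (w - z) - G x) \<longlongrightarrow> 0) (at z)"
    by (rule Lim_null_comparison[OF _ tendsto_mult_left_zero[OF lim]])
  then show "\<exists>f'. ((\<lambda>z. g z x) has_field_derivative f') (at z)"
    by (auto simp: has_field_derivative_iff LIM_zero_iff)
qed

lemma dual_analytic_on_mult:
  assumes c: "c holomorphic_on U" and U: "open U" and \<psi>: "\<psi> \<in> cdual"
  shows "dual_analytic_on (\<lambda>w x. c w * \<psi> x) U"
  unfolding dual_analytic_on_def
proof (intro conjI ballI)
  fix z assume z: "z \<in> U"
  have "((\<lambda>w. (c w - c z) / (w - z) - deriv c z) \<longlongrightarrow> 0) (at z)"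
    using holomorphic_derivI[OF c U z] by (simp add: has_field_derivative_iff LIM_zero_iff)
  then have "((\<lambda>w. dnorm (\<lambda>x. ((c w - c z) / (w - z) - deriv c z) * \<psi> x)) \<longlongrightarrow> 0) (at z)"
    by (intro tendsto_sandwich[OF _ _ tendsto_const
          tendsto_mult_left_zero[OF tendsto_norm_zero, where c="dnorm \<psi>"]])
      (auto simp: dnorm_nonneg cdual_mult[OF \<psi>] dnorm_mult_le[OF \<psi>])
  moreover have "(\<lambda>x. (c w * \<psi> x - c z * \<psi> x) / (w - z) - deriv c z * \<psi> x)
      = (\<lambda>x. ((c w - c z) / (w - z) - deriv c z) * \<psi> x)" for w
    by (simp add: fun_eq_iff algebra_simps diff_divide_distrib)
  ultimately show "\<exists>G\<in>cdual. ((\<lambda>w. dnorm (\<lambda>x. (c w * \<psi> x - c z * \<psi> x) / (w - z) - G x)) \<longlongrightarrow> 0) (at z)"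
    by (intro bexI[where x="\<lambda>x. deriv c z * \<psi> x"] cdual_mult[OF \<psi>]) simp
qed (use U cdual_mult[OF \<psi>] in auto)

lemma dual_analytic_on_cong:
  assumes f: "dual_analytic_on f U" and eq: "\<And>z. z \<in> U \<Longrightarrow> g z = f z"
  shows "dual_analytic_on g U"
  unfolding dual_analytic_on_def
proof (intro conjI ballI)
  have U: "open U" using f by (rule dual_analytic_on_open)
  fix z assume z: "z \<in> U"
  obtain G where G: "G \<in> cdual"
      and lim: "((\<lambda>w. dnorm (\<lambda>y. (f w y - f z y) / (w - z) - G y)) \<longlongrightarrow> 0) (at z)"
    using dual_analytic_onE[OF f z] by blast
  have "eventually (\<lambda>w. dnorm (\<lambda>y. (f w y - f z y) / (w - z) - G y)
                     = dnorm (\<lambda>y. (g w y - g z y) / (w - z) - G y)) (at z)"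
    by (rule eventually_mono[OF eventually_at_in_open'[OF U z]]) (simp add: eq z)
  then have "((\<lambda>w. dnorm (\<lambda>y. (g w y - g z y) / (w - z) - G y)) \<longlongrightarrow> 0) (at z)"
    by (rule Lim_transform_eventually[OF lim])
  with G show "\<exists>G\<in>cdual. ((\<lambda>w. dnorm (\<lambda>x. (g w x - g z x) / (w - z) - G x)) \<longlongrightarrow> 0) (at z)"
    by blast
next
  show "open U" by (rule dual_analytic_on_open[OF f])
  show "g z \<in> cdual" if "z \<in> U" for z
    using eq[OF that] dual_analytic_on_cdual[OF f that] by simp
qed

lemma dual_analytic_on_diff:
  assumes f: "dual_analytic_on f U" and g: "dual_analytic_on g U"
  shows "dual_analytic_on (\<lambda>w x. f w x - g w x) U"
  unfolding dual_analytic_on_def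
proof (intro conjI ballI)
  have U: "open U" using f by (rule dual_analytic_on_open)
  fix z assume z: "z \<in> U"
  obtain F where F: "F \<in> cdual"
      and limF: "((\<lambda>w. dnorm (\<lambda>y. (f w y - f z y) / (w - z) - F y)) \<longlongrightarrow> 0) (at z)"
    using dual_analytic_onE[OF f z] by blast
  obtain G where G: "G \<in> cdual"
      and limG: "((\<lambda>w. dnorm (\<lambda>y. (g w y - g z y) / (w - z) - G y)) \<longlongrightarrow> 0) (at z)"
    using dual_analytic_onE[OF g z] by blast
  let ?qf = "\<lambda>w y. (f w y - f z y) / (w - z) - F y" and ?qg = "\<lambda>w y. (g w y - g z y) / (w - z) - G y"
  have q: "?qf w \<in> cdual" "?qg w \<in> cdual" if "w \<in> U" for w
    using that z F G by (auto intro!: cdual_difference_quotient dual_analytic_on_cdual[OF f]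
        dual_analytic_on_cdual[OF g])
  have "((\<lambda>w. dnorm (\<lambda>y. ?qf w y - ?qg w y)) \<longlongrightarrow> 0) (at z)"
  proof (rule tendsto_sandwich[OF _ _ tendsto_const tendsto_add[OF limF limG, simplified]])
    show "\<forall>\<^sub>F w in at z. 0 \<le> dnorm (\<lambda>y. ?qf w y - ?qg w y)"
      using eventually_at_in_open'[OF U z] by eventually_elim (simp add: dnorm_nonneg cdual_minus q)
    show "\<forall>\<^sub>F w in at z. dnorm (\<lambda>y. ?qf w y - ?qg w y) \<le> dnorm (?qf w) + dnorm (?qg w)"
      using eventually_at_in_open'[OF U z] by eventually_elim (simp add: dnorm_diff_le q)
  qed
  moreover have "(\<lambda>y. (f w y - g w y - (f z y - g z y)) / (w - z) - (F y - G y))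
     = (\<lambda>y. ?qf w y - ?qg w y)" for w
    by (rule ext) (simp add: divide_inverse algebra_simps)
  ultimately show "\<exists>H\<in>cdual. ((\<lambda>w. dnorm (\<lambda>y. (f w y - g w y - (f z y - g z y)) / (w - z) - H y)) \<longlongrightarrow> 0) (at z)"
    by (intro bexI[where x="\<lambda>x. F x - G x"] cdual_minus[OF F G]) simp
next
  show "open U" by (rule dual_analytic_on_open[OF f])
  show "(\<lambda>x. f z x - g z x) \<in> cdual" if "z \<in> U" for z
    by (rule cdual_minus[OF dual_analytic_on_cdual[OF f that] dual_analytic_on_cdual[OF g that]])
qed

lemma dual_analytic_on_dnorm_diff_tendsto:
  assumes f: "dual_analytic_on f U" and z: "z \<in> U"
  shows "((\<lambda>w. dnorm (\<lambda>y. f w y - f z y)) \<longlongrightarrow> 0) (at z)"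
proof -
  obtain G where G: "G \<in> cdual"
      and lim: "((\<lambda>w. dnorm (\<lambda>y. (f w y - f z y) / (w - z) - G y)) \<longlongrightarrow> 0) (at z)"
    using dual_analytic_onE[OF f z] by blast
  let ?q = "\<lambda>w y. (f w y - f z y) / (w - z) - G y"
  have ev: "eventually (\<lambda>w. w \<in> U - {z}) (at z)"
    by (rule eventually_at_in_open[OF dual_analytic_on_open[OF f] z])
  show ?thesis
  proof (rule tendsto_sandwich[where f="\<lambda>w. 0" and h="\<lambda>w. cmod (w - z) * (dnorm (?q w) + dnorm G)"])
    show "\<forall>\<^sub>F w in at z. 0 \<le> dnorm (\<lambda>y. f w y - f z y)"
      by (rule eventually_mono[OF ev]) (auto intro!: dnorm_nonneg cdual_minus dual_analytic_on_cdual[OF f] z)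
    show "\<forall>\<^sub>F w in at z. dnorm (\<lambda>y. f w y - f z y) \<le> cmod (w - z) * (dnorm (?q w) + dnorm G)"
    proof (rule eventually_mono[OF ev])
      fix w assume w: "w \<in> U - {z}"
      have q: "?q w \<in> cdual"
        using w z by (auto intro!: cdual_difference_quotient G dual_analytic_on_cdual[OF f])
      have "(\<lambda>y. f w y - f z y) = (\<lambda>y. (w - z) * ((\<lambda>y. ?q w y + G y) y))"
        using w by (auto simp: fun_eq_iff)
      then have "dnorm (\<lambda>y. f w y - f z y) \<le> cmod (w - z) * dnorm (\<lambda>y. ?q w y + G y)"
        using dnorm_mult_le[OF cdual_plus[OF q G], of "w - z"] by simp
      also have "\<dots> \<le> cmod (w - z) * (dnorm (?q w) + dnorm G)"
        by (rule mult_left_mono[OF dnorm_add_le[OF q G] norm_ge_zero])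
      finally show "dnorm (\<lambda>y. f w y - f z y) \<le> cmod (w - z) * (dnorm (?q w) + dnorm G)" .
    qed
    have "((\<lambda>w. cmod (w - z)) \<longlongrightarrow> 0) (at z)"
      by (intro tendsto_norm_zero LIM_zero tendsto_ident_at)
    then show "((\<lambda>w. cmod (w - z) * (dnorm (?q w) + dnorm G)) \<longlongrightarrow> 0) (at z)"
      using tendsto_mult[OF _ tendsto_add[OF lim tendsto_const]] by fastforce
  qed simp
qed

lemma continuous_on_dnorm_dual_analytic:
  assumes f: "dual_analytic_on f U"
  shows "continuous_on U (\<lambda>z. dnorm (f z))"
  unfolding continuous_on_eq_continuous_at[OF dual_analytic_on_open[OF f]] continuous_at
proof
  fix z assume z: "z \<in> U"
  have "norm (dnorm (f w) - dnorm (f z)) \<le> dnorm (\<lambda>y. f w y - f z y)" if w: "w \<in> U" for w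
  proof -
    have fw: "f w \<in> cdual" and fz: "f z \<in> cdual" using dual_analytic_on_cdual[OF f] w z by auto
    have "dnorm (f w) \<le> dnorm (\<lambda>y. f w y - f z y) + dnorm (f z)"
      using dnorm_add_le[OF cdual_minus[OF fw fz] fz] by simp
    moreover have "dnorm (f z) \<le> dnorm (\<lambda>y. f z y - f w y) + dnorm (f w)"
      using dnorm_add_le[OF cdual_minus[OF fz fw] fw] by simp
    ultimately show ?thesis using dnorm_minus_commute[of "f z" "f w"] by simp
  qed
  then have "((\<lambda>w. dnorm (f w) - dnorm (f z)) \<longlongrightarrow> 0) (at z)"
    using eventually_at_in_open'[OF dual_analytic_on_open[OF f] z]
    by (intro Lim_null_comparison[OF _ dual_analytic_on_dnorm_diff_tendsto[OF f z]])
      (simp add: eventually_mono)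
  then show "((\<lambda>w. dnorm (f w)) \<longlongrightarrow> dnorm (f z)) (at z)" by (simp add: LIM_zero_iff)
qed

lemma holomorphic_linear_approx_bound:
  fixes h :: "complex \<Rightarrow> complex"
  assumes hol: "h holomorphic_on ball z0 r" and cont: "continuous_on (cball z0 r) h"
    and r: "0 < r" and M: "\<And>w. w \<in> cball z0 r \<Longrightarrow> cmod (h w) \<le> M"
    and w: "w \<in> cball z0 (r/2)"
  shows "cmod (h w - (h z0 + deriv h z0 * (w - z0))) \<le> (8 * M / r^2) * cmod (w - z0) ^ 2"
proof -
  define S where "S = cball z0 (r/2)"
  have Sb: "S \<subseteq> ball z0 r" using r by (auto simp: S_def)
  have der: "((deriv ^^ i) h has_field_derivative (deriv ^^ Suc i) h x) (at x within S)"
    if "x \<in> S" for i x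
  proof -
    have "x \<in> ball z0 r" using that Sb by auto
    from has_field_derivative_higher_deriv[OF hol open_ball this, of i]
    show ?thesis by (rule has_field_derivative_at_within)
  qed
  have second: "cmod ((deriv ^^ Suc 1) h x) \<le> 8 * M / r^2" if x: "x \<in> S" for x
  proof -
    have dx: "dist z0 x \<le> r/2" using x by (simp add: S_def)
    have sub: "ball x (r/2) \<subseteq> ball z0 r"
    proof
      fix u assume "u \<in> ball x (r/2)"
      then show "u \<in> ball z0 r" using dist_triangle[of z0 u x] dx by simp
    qed
    have subc: "cball x (r/2) \<subseteq> cball z0 r"
    proof
      fix u assume "u \<in> cball x (r/2)"
      then show "u \<in> cball z0 r" using dist_triangle[of z0 u x] dx by simp
    qed
    have "cmod ((deriv ^^ 2) h x) \<le> fact 2 * M / (r/2)^2"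
    proof (rule Cauchy_inequality)
      show "h holomorphic_on ball x (r/2)" by (rule holomorphic_on_subset[OF hol sub])
      show "continuous_on (cball x (r/2)) h" by (rule continuous_on_subset[OF cont subc])
      show "cmod (h u) \<le> M" if "cmod (x - u) = r/2" for u
        using M subc that by (auto simp: dist_norm)
    qed (use r in simp)
    then show ?thesis by (simp add: power2_eq_square numeral_eq_Suc)
  qed
  have "cmod ((deriv ^^ 0) h w - (\<Sum>i\<le>1. (deriv ^^ i) h z0 * (w - z0) ^ i / fact i))
        \<le> 8 * M / r^2 * cmod (w - z0) ^ Suc 1 / fact 1"
    by (rule field_Taylor[where S=S and f="\<lambda>i. (deriv ^^ i) h"])
       (use der second w r in \<open>auto simp: S_def\<close>)
  then show ?thesis by (simp add: power2_eq_square)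
qed

lemma cdual_pointwise_deriv:
  assumes U: "open U" and z0: "z0 \<in> U" and inc: "\<And>z. z \<in> U \<Longrightarrow> f z \<in> cdual"
    and hol: "\<And>x. (\<lambda>z. f z x) holomorphic_on U"
    and r: "r > 0" "cball z0 r \<subseteq> U" and M: "\<And>w. w \<in> cball z0 r \<Longrightarrow> dnorm (f w) \<le> M"
  shows "(\<lambda>x. deriv (\<lambda>z. f z x) z0) \<in> cdual"
proof (rule cdualI[where K="M / r"])
  have hder: "((\<lambda>z. f z x) has_field_derivative deriv (\<lambda>z. f z x) z0) (at z0)" for x
    using hol U z0 by (intro holomorphic_derivI) auto
  fix x y
  have "((\<lambda>z. f z (x + y)) has_field_derivative
      deriv (\<lambda>z. f z x) z0 + deriv (\<lambda>z. f z y) z0) (at z0)"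
    by (rule has_field_derivative_transform_within_open[OF DERIV_add[OF hder hder] U z0])
      (simp add: cdual_add[OF inc])
  then show "deriv (\<lambda>z. f z (x + y)) z0 = deriv (\<lambda>z. f z x) z0 + deriv (\<lambda>z. f z y) z0"
    using hder DERIV_unique by blast
next
  have hder: "((\<lambda>z. f z x) has_field_derivative deriv (\<lambda>z. f z x) z0) (at z0)" for x
    using hol U z0 by (intro holomorphic_derivI) auto
  fix c x
  have "((\<lambda>z. f z (scaleC c x)) has_field_derivative c * deriv (\<lambda>z. f z x) z0) (at z0)"
    by (rule has_field_derivative_transform_within_open[OF DERIV_cmult[OF hder] U z0])
      (simp add: cdual_scaleC[OF inc])
  then show "deriv (\<lambda>z. f z (scaleC c x)) z0 = c * deriv (\<lambda>z. f z x) z0"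
    using hder DERIV_unique by blast
next
  fix x
  have "cmod ((deriv ^^ 1) (\<lambda>z. f z x) z0) \<le> fact 1 * (M * norm x) / r ^ 1"
  proof (rule Cauchy_inequality)
    show "(\<lambda>z. f z x) holomorphic_on ball z0 r"
      by (rule holomorphic_on_subset[OF hol]) (use r ball_subset_cball in blast)
    show "continuous_on (cball z0 r) (\<lambda>z. f z x)"
      by (rule continuous_on_subset[OF holomorphic_on_imp_continuous_on[OF hol] r(2)])
    show "cmod (f w x) \<le> M * norm x" if "cmod (z0 - w) = r" for w
    proof -
      have w: "w \<in> cball z0 r" using that by (simp add: dist_norm)
      have "cmod (f w x) \<le> dnorm (f w) * norm x" using r(2) w by (intro cdual_norm_le inc) auto
      also have "\<dots> \<le> M * norm x" by (rule mult_right_mono[OF M[OF w] norm_ge_zero])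
      finally show ?thesis .
    qed
  qed (use r in simp)
  then show "cmod (deriv (\<lambda>z. f z x) z0) \<le> M / r * norm x" by simp
qed

text \<open>The derivative is the functional of pointwise derivatives; the quadratic Taylor bound is
uniform over the unit ball of X.\<close>

lemma weakly_holomorphic_imp_dual_analytic:
  assumes U: "open U" and inc: "\<And>z. z \<in> U \<Longrightarrow> f z \<in> cdual"
    and hol: "\<And>x. (\<lambda>z. f z x) holomorphic_on U"
    and bnd: "\<And>z. z \<in> U \<Longrightarrow> \<exists>r>0. \<exists>M. cball z r \<subseteq> U \<and> (\<forall>w\<in>cball z r. dnorm (f w) \<le> M)"
  shows "dual_analytic_on f U"
proof (rule dual_analytic_onI_quotient_bound)
  fix z0 assume z0: "z0 \<in> U"
  obtain r M where r: "r > 0" and cb: "cball z0 r \<subseteq> U" and M: "\<And>w. w \<in> cball z0 r \<Longrightarrow> dnorm (f w) \<le> M"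
    using bnd[OF z0] by blast
  define G where "G x = deriv (\<lambda>z. f z x) z0" for x
  have G: "G \<in> cdual" unfolding G_def by (rule cdual_pointwise_deriv[OF U z0 inc hol r cb M])
  have M0: "0 \<le> M" using M[of z0] dnorm_nonneg[OF inc[OF z0]] r by auto
  have key: "dnorm (\<lambda>x. (f w x - f z0 x) / (w - z0) - G x) \<le> (8 * M / r^2) * cmod (w - z0)"
    if w: "w \<in> ball z0 (r/2) - {z0}" for w
  proof (rule dnorm_le)
    show "0 \<le> 8 * M / r\<^sup>2 * cmod (w - z0)" using M0 r by simp
    fix x
    have nz: "w - z0 \<noteq> 0" using w by auto
    have "cmod (f w x - (f z0 x + G x * (w - z0))) \<le> (8 * (M * norm x) / r^2) * cmod (w - z0) ^ 2"
      unfolding G_def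
    proof (rule holomorphic_linear_approx_bound[OF _ _ r])
      show "(\<lambda>z. f z x) holomorphic_on ball z0 r"
        by (rule holomorphic_on_subset[OF hol]) (use cb ball_subset_cball in blast)
      show "continuous_on (cball z0 r) (\<lambda>z. f z x)"
        by (rule continuous_on_subset[OF holomorphic_on_imp_continuous_on[OF hol] cb])
      show "cmod (f u x) \<le> M * norm x" if "u \<in> cball z0 r" for u
        using cdual_norm_le[OF inc, of u x] M[OF that] that cb
        by (meson mult_right_mono norm_ge_zero order_trans subsetD)
    qed (use w in auto)
    moreover have "(f w x - f z0 x) / (w - z0) - G x = (f w x - (f z0 x + G x * (w - z0))) / (w - z0)"
      using nz by (simp add: field_simps)
    ultimately have "cmod ((f w x - f z0 x) / (w - z0) - G x)
        \<le> (8 * (M * norm x) / r^2) * cmod (w - z0) ^ 2 / cmod (w - z0)"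
      by (metis divide_right_mono norm_divide norm_ge_zero)
    also have "\<dots> = (8 * M / r^2) * cmod (w - z0) * norm x" using nz by (simp add: power2_eq_square)
    finally show "cmod ((f w x - f z0 x) / (w - z0) - G x) \<le> 8 * M / r\<^sup>2 * cmod (w - z0) * norm x" .
  qed
  have "eventually (\<lambda>w. w \<in> ball z0 (r/2) - {z0}) (at z0)"
    by (rule eventually_at_in_open) (use r in auto)
  then have "eventually (\<lambda>w. dnorm (\<lambda>x. (f w x - f z0 x) / (w - z0) - G x)
      \<le> (8 * M / r^2) * cmod (w - z0)) (at z0)"
    by (rule eventually_mono) (rule key)
  with G show "\<exists>G\<in>cdual. \<exists>C. eventually
      (\<lambda>w. dnorm (\<lambda>x. (f w x - f z0 x) / (w - z0) - G x) \<le> C * cmod (w - z0)) (at z0)"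
    by blast
qed (use U inc in auto)

section \<open>Spectrum of the adjoint and eigenvectors\<close>

lemma adj_spectrum_subset_op_spectrum:
  assumes T: "bounded_clinear_op T"
  shows "adj_spectrum T \<subseteq> op_spectrum T"
proof
  fix z assume z: "z \<in> adj_spectrum T"
  show "z \<in> op_spectrum T"
  proof (rule ccontr)
    assume "z \<notin> op_spectrum T"
    then obtain S where S: "bounded_linear S" and S1: "\<And>x. S (T x - scaleC z x) = x"
      and S2: "\<And>x. T (S x) - scaleC z (S x) = x"
      by (auto simp: op_spectrum_def)
    have SC: "S (scaleC c x) = scaleC c (S x)" for c x
    proof -
      have "scaleC c x = T (scaleC c (S x)) - scaleC z (scaleC c (S x))"
        using S2[of x] by (metis scaleC_diff_right bounded_clinear_op_scaleC[OF T] scaleC_commute)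
      then show ?thesis using S1 by metis
    qed
    have Sdiff: "S (x - y) = S x - S y" for x y
      using S linear_diff bounded_linear.linear by blast
    let ?S' = "\<lambda>\<phi> x. \<phi> (S x)"
    have "\<forall>\<phi>\<in>cdual. ?S' \<phi> \<in> cdual" using cdual_comp(1)[OF S SC] by blast
    moreover have "\<exists>K. \<forall>\<phi>\<in>cdual. dnorm (?S' \<phi>) \<le> K * dnorm \<phi>"
      using cdual_comp(2)[OF S SC] by blast
    moreover have "\<forall>\<phi>\<in>cdual. ?S' (dshift (adj T) z \<phi>) = \<phi>"
      by (simp add: dshift_pairing S2)
    moreover have "\<forall>\<phi>\<in>cdual. dshift (adj T) z (?S' \<phi>) = \<phi>"
    proof (intro ballI ext)
      fix \<phi> :: "'a \<Rightarrow> complex" and x assume \<phi>: "\<phi> \<in> cdual"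
      have "dshift (adj T) z (?S' \<phi>) x = \<phi> (S (T x - scaleC z x))"
        by (simp add: dshift_apply cdual_diff[OF \<phi>] cdual_scaleC[OF \<phi>] Sdiff SC)
      then show "dshift (adj T) z (?S' \<phi>) x = \<phi> x" by (simp add: S1)
    qed
    ultimately have "\<exists>S. (\<forall>\<phi>\<in>cdual. S \<phi> \<in> cdual) \<and>
       (\<exists>K. \<forall>\<phi>\<in>cdual. dnorm (S \<phi>) \<le> K * dnorm \<phi>) \<and>
       (\<forall>\<phi>\<in>cdual. S (dshift (adj T) z \<phi>) = \<phi>) \<and> (\<forall>\<phi>\<in>cdual. dshift (adj T) z (S \<phi>) = \<phi>)"
      by (intro exI[of _ ?S']) blast
    then have "z \<notin> dspectrum_on cdual (adj T)" unfolding dspectrum_on_def by simp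
    then show False using z by (simp add: adj_spectrum_def)
  qed
qed

lemma eigenvalue_adj_in_op_spectrum:
  assumes \<psi>: "\<psi> \<in> cdual" and e: "dshift (adj T) z \<psi> = (\<lambda>x. 0)" and nz: "\<psi> \<noteq> (\<lambda>x. 0)"
  shows "z \<in> op_spectrum T"
proof (rule ccontr)
  assume "z \<notin> op_spectrum T"
  then obtain S where S2: "\<And>x. T (S x) - scaleC z (S x) = x"
    by (auto simp: op_spectrum_def)
  have "\<psi> x = dshift (adj T) z \<psi> (S x)" for x
    by (simp add: dshift_pairing[OF \<psi>] S2)
  then show False using nz e by auto
qed

lemma eigenvalue_in_adj_spectrum:
  assumes \<psi>: "\<psi> \<in> cdual" and e: "dshift (adj T) z \<psi> = (\<lambda>x. 0)" and nz: "\<psi> \<noteq> (\<lambda>x. 0)"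
  shows "z \<in> adj_spectrum T"
proof (rule ccontr)
  assume "z \<notin> adj_spectrum T"
  then obtain S where "\<forall>\<phi>\<in>cdual. S (dshift (adj T) z \<phi>) = \<phi>"
    by (auto simp: adj_spectrum_def dspectrum_on_def)
  then have "S (dshift (adj T) z \<psi>) = \<psi>" "S (dshift (adj T) z (\<lambda>x. 0)) = (\<lambda>x. 0)"
    using \<psi> cdual_zero by blast+
  then show False using e nz by simp
qed

lemma dual_analytic_on_zero: "open U \<Longrightarrow> dual_analytic_on (\<lambda>w x. 0) U"
  using dual_analytic_on_mult[of "\<lambda>w. 0" U "\<lambda>x. 0"] by simp

lemma zero_in_adj_glocal_subspace: "(\<lambda>x. 0) \<in> adj_glocal_subspace T F" if "closed F"
  unfolding adj_glocal_subspace_def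
  using that by (auto intro!: exI[where x="\<lambda>w x. 0"] dual_analytic_on_zero)

lemma eigenvector_in_adj_glocal_subspace:
  assumes \<psi>: "\<psi> \<in> cdual" and e: "dshift (adj T) z \<psi> = (\<lambda>x. 0)"
  shows "\<psi> \<in> adj_glocal_subspace T {z}"
  unfolding adj_glocal_subspace_def
proof (intro CollectI conjI exI ballI)
  have "(\<lambda>w. 1 / (z - w)) holomorphic_on (- {z})"
    by (intro holomorphic_intros) auto
  then show "dual_analytic_on (\<lambda>w x. 1 / (z - w) * \<psi> x) (- {z})"
    by (rule dual_analytic_on_mult[OF _ _ \<psi>]) auto
  fix w assume w: "w \<in> - {z}"
  have Tx: "\<psi> (T x) = z * \<psi> x" for x
    using fun_cong[OF e, of x] by (simp add: dshift_apply)
  have "inverse (z - w) * ((z - w) * \<psi> x) = \<psi> x" for x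
    using w by simp
  then show "dshift (adj T) w ((\<lambda>w x. 1 / (z - w) * \<psi> x) w) = \<psi>"
    by (simp add: fun_eq_iff dshift_apply Tx algebra_simps divide_inverse)
qed (rule \<psi>)

section \<open>The annihilation principle\<close>

lemma tendsto_zero_at_infinity_by_bound:
  fixes h :: "complex \<Rightarrow> complex"
  assumes b: "\<And>z. R \<le> cmod z \<Longrightarrow> cmod (h z) \<le> C / (cmod z - K)" and KR: "K < R"
  shows "(h \<longlongrightarrow> 0) at_infinity"
  unfolding Lim_at_infinity
proof (intro allI impI)
  fix e :: real assume e: "0 < e"
  show "\<exists>b. \<forall>z. b \<le> norm z \<longrightarrow> dist (h z) 0 < e"
  proof (intro exI allI impI)
    fix z :: complex assume z: "max R (K + \<bar>C\<bar> / e + 1) \<le> norm z"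
    have pos: "0 < cmod z - K" using z KR by linarith
    have "\<bar>C\<bar> / e < cmod z - K" using z by linarith
    then have "C / (cmod z - K) < e" using e pos by (simp add: field_simps)
    moreover have "cmod (h z) \<le> C / (cmod z - K)" using b z by simp
    ultimately show "dist (h z) 0 < e" by simp
  qed
qed

lemma holomorphic_on_UNIV_glue:
  fixes f g :: "complex \<Rightarrow> complex"
  assumes f: "f holomorphic_on - K" and g: "g holomorphic_on - F"
    and closed: "closed K" "closed F" and disj: "K \<inter> F = {}"
    and eq: "\<And>w. w \<notin> K \<Longrightarrow> w \<notin> F \<Longrightarrow> f w = g w"
  shows "(\<lambda>w. if w \<in> K then g w else f w) holomorphic_on UNIV"
  unfolding holomorphic_on_open[OF open_UNIV]
proof
  fix w :: complex
  have oF: "open (- F)" and oK: "open (- K)" using closed by auto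
  show "\<exists>f'. ((\<lambda>w. if w \<in> K then g w else f w) has_field_derivative f') (at w)"
  proof (cases "w \<in> K")
    case False
    have "((\<lambda>w. if w \<in> K then g w else f w) has_field_derivative deriv f w) (at w)"
      by (rule has_field_derivative_transform_within_open[OF holomorphic_derivI[OF f oK] oK])
         (use False in auto)
    then show ?thesis ..
  next
    case True
    then have wF: "w \<in> - F" using disj by auto
    have "((\<lambda>w. if w \<in> K then g w else f w) has_field_derivative deriv g w) (at w)"
      by (rule has_field_derivative_transform_within_open[OF holomorphic_derivI[OF g oF wF] oF wF])
        (use eq in auto)
    then show ?thesis ..
  qed
qed

text \<open>The resolvent \<open>g\<close> of \<open>\<phi>\<close> and the solution \<open>f\<close> for \<open>x\<close> satisfy \<open>g(z)(x) = \<phi>(f(z))\<close> off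
\<open>K \<union> F\<close>, so together they form an entire function; it decays like \<open>1/|z|\<close>.\<close>

lemma glocal_pairing_vanishes:
  assumes T: "bounded_clinear_op T" and \<phi>: "\<phi> \<in> cdual"
    and F: "closed F" and K: "compact K" "K \<inter> F = {}"
    and g: "dual_analytic_on g (- F)" and geq: "\<And>z. z \<in> - F \<Longrightarrow> dshift (adj T) z (g z) = \<phi>"
    and x: "x \<in> glocal_subspace T K" and z: "z \<in> - F"
  shows "g z x = 0"
proof -
  obtain f where f: "X_analytic_on f (- K)"
    and feq: "\<And>z. z \<in> - K \<Longrightarrow> T (f z) - scaleC z (f z) = x"
    using x by (auto simp: glocal_subspace_def)
  have overlap: "\<phi> (f w) = g w x" if w: "w \<notin> K" "w \<notin> F" for w
  proof -
    have wF: "w \<in> - F" using w by simp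
    show ?thesis using dshift_pairing[OF dual_analytic_on_cdual[OF g wF], of T w "f w"] geq[OF wF] feq w
      by simp
  qed
  define h where "h w = (if w \<in> K then g w x else \<phi> (f w))" for w
  have "h holomorphic_on UNIV"
    unfolding h_def
    by (rule holomorphic_on_UNIV_glue[OF X_analytic_on_pairing_holomorphic[OF f \<phi>]
          dual_analytic_on_eval_holomorphic[OF g] compact_imp_closed[OF K(1)] F K(2) overlap])
  moreover have "(h \<longlongrightarrow> 0) at_infinity"
  proof -
    obtain R where R: "\<And>w. w \<in> K \<Longrightarrow> cmod w \<le> R"
      using compact_imp_bounded[OF K(1)] by (auto simp: bounded_iff)
    show ?thesis
    proof (rule tendsto_zero_at_infinity_by_bound[where R="max R (onorm T) + 1" and K="onorm T"
          and C="dnorm \<phi> * norm x"])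
      fix w :: complex assume w: "max R (onorm T) + 1 \<le> cmod w"
      then have wK: "w \<notin> K" and wT: "onorm T < cmod w" using R by force+
      have "cmod (h w) \<le> dnorm \<phi> * norm (f w)" using wK by (simp add: h_def cdual_norm_le[OF \<phi>])
      also have "\<dots> \<le> dnorm \<phi> * (norm x / (cmod w - onorm T))"
        by (rule mult_left_mono[OF norm_shift_solution_le[OF T feq wT] dnorm_nonneg[OF \<phi>]])
          (use wK in simp)
      also have "\<dots> = dnorm \<phi> * norm x / (cmod w - onorm T)" by simp
      finally show "cmod (h w) \<le> dnorm \<phi> * norm x / (cmod w - onorm T)" .
    qed simp
  qed
  ultimately have "h z = 0" by (rule Liouville_weak)
  then show ?thesis using overlap[of z] z by (simp add: h_def split: if_splits)
qed

definition glocal_dense :: "('a::complex_banach \<Rightarrow> 'a) \<Rightarrow> bool" where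
  "glocal_dense T \<longleftrightarrow> (\<forall>U. U \<noteq> {} \<longrightarrow> openin (top_of_set (op_spectrum T)) U \<longrightarrow>
                  closure (glocal_subspace T (closure U)) = UNIV)"

lemma adj_glocal_subspace_eq_zero:
  assumes T: "bounded_clinear_op T" and D: "glocal_dense T"
    and F: "closed F" and \<mu>: "\<mu> \<in> op_spectrum T" "\<mu> \<notin> F"
    and \<phi>F: "\<phi> \<in> adj_glocal_subspace T F"
  shows "\<phi> = (\<lambda>x. 0)"
proof -
  obtain g where \<phi>: "\<phi> \<in> cdual" and g: "dual_analytic_on g (- F)"
    and geq: "\<And>z. z \<in> - F \<Longrightarrow> dshift (adj T) z (g z) = \<phi>"
    using \<phi>F by (auto simp: adj_glocal_subspace_def)
  obtain e where e: "e > 0" "ball \<mu> e \<subseteq> - F"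
    using F \<mu>(2) open_contains_ball by blast
  define U where "U = op_spectrum T \<inter> ball \<mu> (e/2)"
  have clU: "closure U \<subseteq> cball \<mu> (e/2)"
    by (rule closure_minimal) (auto simp: U_def)
  have K: "compact (closure U)" "closure U \<inter> F = {}"
    using bounded_subset[OF bounded_cball clU] clU e by (auto simp: compact_eq_bounded_closed subset_eq)
  have "U \<noteq> {}" using \<mu>(1) e(1) by (auto simp: U_def)
  moreover have "openin (top_of_set (op_spectrum T)) U" unfolding U_def by auto
  ultimately have dense: "closure (glocal_subspace T (closure U)) = UNIV"
    using D by (simp add: glocal_dense_def)
  have "g z = (\<lambda>x. 0)" if z: "z \<in> - F" for z
  proof -
    have gz: "g z \<in> cdual" by (rule dual_analytic_on_cdual[OF g z])
    have "closed {x. g z x = 0}"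
      using cdual_bounded_linear[OF gz] by (intro closed_Collect_eq) (auto intro: linear_continuous_on)
    moreover have "glocal_subspace T (closure U) \<subseteq> {x. g z x = 0}"
      using glocal_pairing_vanishes[OF T \<phi> F K g geq _ z] by blast
    ultimately have "UNIV \<subseteq> {x. g z x = 0}" using dense closure_minimal by metis
    then show ?thesis by auto
  qed
  then show ?thesis using geq[of \<mu>] \<mu>(2) by simp
qed

section \<open>Single-valued extension property and local spectra\<close>

text \<open>An analytic family of eigenvectors has, near any point where it is non-zero, eigenvectors
for two distinct eigenvalues; the one eigenvalue lies in \<open>\<sigma>(T)\<close> and kills the eigenvector of the
other.\<close>

lemma adj_svep:
  assumes T: "bounded_clinear_op T" and D: "glocal_dense T"
    and g: "dual_analytic_on g W" and e: "\<And>z. z \<in> W \<Longrightarrow> dshift (adj T) z (g z) = (\<lambda>x. 0)"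
    and z0: "z0 \<in> W"
  shows "g z0 = (\<lambda>x. 0)"
proof (rule ccontr)
  assume nz: "g z0 \<noteq> (\<lambda>x. 0)"
  then obtain x where x: "g z0 x \<noteq> 0" by auto
  have W: "open W" using g by (rule dual_analytic_on_open)
  have "continuous_on W (\<lambda>w. g w x)"
    by (rule holomorphic_on_imp_continuous_on[OF dual_analytic_on_eval_holomorphic[OF g]])
  then have "((\<lambda>w. g w x) \<longlongrightarrow> g z0 x) (at z0)"
    using W z0 by (simp add: continuous_on_eq_continuous_at continuous_at)
  then have ev1: "eventually (\<lambda>w. g w x \<noteq> 0) (at z0)"
    by (rule tendsto_imp_eventually_ne[OF _ x])
  have ev2: "eventually (\<lambda>w. w \<in> W - {z0}) (at z0)" by (rule eventually_at_in_open[OF W z0])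
  obtain z1 where z1: "g z1 x \<noteq> 0" "z1 \<in> W" "z1 \<noteq> z0"
    using eventually_happens'[OF at_neq_bot eventually_conj[OF ev1 ev2]] by auto
  have "z1 \<in> op_spectrum T"
    using z1 by (intro eigenvalue_adj_in_op_spectrum[OF dual_analytic_on_cdual[OF g z1(2)] e]) auto
  moreover have "g z0 \<in> adj_glocal_subspace T {z0}"
    by (rule eigenvector_in_adj_glocal_subspace[OF dual_analytic_on_cdual[OF g z0] e[OF z0]])
  ultimately have "g z0 = (\<lambda>x. 0)"
    using adj_glocal_subspace_eq_zero[OF T D closed_singleton] z1(3) by blast
  then show False using nz by simp
qed

definition adj_local_solution ::
  "('a::complex_banach \<Rightarrow> 'a) \<Rightarrow> ('a \<Rightarrow> complex) \<Rightarrow> complex set \<Rightarrow> (complex \<Rightarrow> 'a \<Rightarrow> complex) \<Rightarrow> bool" where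
  "adj_local_solution T \<phi> U f \<longleftrightarrow> dual_analytic_on f U \<and> (\<forall>z\<in>U. dshift (adj T) z (f z) = \<phi>)"

lemma adj_local_resolvent_eq: "adj_local_resolvent T \<phi> = \<Union>{U. \<exists>f. adj_local_solution T \<phi> U f}"
  by (simp add: adj_local_resolvent_def adj_local_solution_def)

lemma open_adj_local_resolvent: "open (adj_local_resolvent T \<phi>)"
  unfolding adj_local_resolvent_def by (auto intro!: open_Union dest: dual_analytic_on_open)

lemma closed_adj_local_spectrum: "closed (adj_local_spectrum T \<phi>)"
  unfolding adj_local_spectrum_def by (rule closed_Compl[OF open_adj_local_resolvent])

lemma adj_local_solution_subset_resolvent:
  "adj_local_solution T \<phi> U f \<Longrightarrow> U \<subseteq> adj_local_resolvent T \<phi>"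
  unfolding adj_local_resolvent_eq by blast

lemma adj_local_spectrum_zero: "adj_local_spectrum T (\<lambda>x. 0) = {}"
proof -
  have "adj_local_solution T (\<lambda>x. 0) UNIV (\<lambda>w x. 0)"
    by (simp add: adj_local_solution_def dual_analytic_on_zero)
  then show ?thesis
    using adj_local_solution_subset_resolvent by (fastforce simp: adj_local_spectrum_def)
qed

lemma adj_local_solutions_agree:
  assumes T: "bounded_clinear_op T" and D: "glocal_dense T"
    and f: "adj_local_solution T \<phi> U f" and f': "adj_local_solution T \<phi> U' f'"
    and z: "z \<in> U" "z \<in> U'"
  shows "f z = f' z"
proof -
  have fa: "dual_analytic_on f U" and fa': "dual_analytic_on f' U'"
    using f f' by (auto simp: adj_local_solution_def)
  have o: "open (U \<inter> U')" using fa fa' by (auto simp: dual_analytic_on_def)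
  have "dual_analytic_on (\<lambda>w x. f w x - f' w x) (U \<inter> U')"
    by (rule dual_analytic_on_diff; rule dual_analytic_on_subset[OF _ _ o]) (use fa fa' in auto)
  moreover have "dshift (adj T) w (\<lambda>x. f w x - f' w x) = (\<lambda>x. 0)" if "w \<in> U \<inter> U'" for w
    using f f' that by (simp add: dshift_diff adj_local_solution_def)
  ultimately have "(\<lambda>x. f z x - f' z x) = (\<lambda>x. 0)"
    using adj_svep[OF T D] z by blast
  then show ?thesis by (auto simp: fun_eq_iff dest: fun_cong)
qed

text \<open>By SVEP the local solutions glue together over the whole local resolvent set.\<close>

lemma mem_adj_glocal_subspace_local_spectrum:
  assumes T: "bounded_clinear_op T" and D: "glocal_dense T" and \<phi>: "\<phi> \<in> cdual"
  shows "\<phi> \<in> adj_glocal_subspace T (adj_local_spectrum T \<phi>)"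
proof -
  define R where "R = adj_local_resolvent T \<phi>"
  define G where "G z = (SOME v. \<exists>U f. adj_local_solution T \<phi> U f \<and> z \<in> U \<and> v = f z)" for z
  have Gf: "G z = f z" if f: "adj_local_solution T \<phi> U f" and z: "z \<in> U" for U f z
  proof -
    have "\<exists>v. \<exists>U f. adj_local_solution T \<phi> U f \<and> z \<in> U \<and> v = f z" using f z by blast
    then have "\<exists>U' f'. adj_local_solution T \<phi> U' f' \<and> z \<in> U' \<and> G z = f' z"
      unfolding G_def by (rule someI_ex)
    then show ?thesis using adj_local_solutions_agree[OF T D f] z by metis
  qed
  have "dual_analytic_on G R"
    unfolding dual_analytic_on_def
  proof (intro conjI ballI)
    show "open R" unfolding R_def by (rule open_adj_local_resolvent)
    fix z assume z: "z \<in> R"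
    then obtain U f where f: "adj_local_solution T \<phi> U f" and zU: "z \<in> U"
      unfolding R_def adj_local_resolvent_eq by blast
    have "dual_analytic_on G U"
      by (rule dual_analytic_on_cong[where f=f]) (use f Gf in \<open>auto simp: adj_local_solution_def\<close>)
    then show "G z \<in> cdual"
      and "\<exists>g\<in>cdual. ((\<lambda>w. dnorm (\<lambda>x. (G w x - G z x) / (w - z) - g x)) \<longlongrightarrow> 0) (at z)"
      using zU by (auto simp: dual_analytic_on_def)
  qed
  moreover have "dshift (adj T) z (G z) = \<phi>" if z: "z \<in> R" for z
  proof -
    obtain U f where f: "adj_local_solution T \<phi> U f" and zU: "z \<in> U"
      using z unfolding R_def adj_local_resolvent_eq by blast
    then show ?thesis using Gf[OF f zU] by (simp add: adj_local_solution_def)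
  qed
  moreover have "- adj_local_spectrum T \<phi> = R" by (simp add: adj_local_spectrum_def R_def)
  ultimately show ?thesis
    unfolding adj_glocal_subspace_def using \<phi> by auto
qed

lemma adj_spectrum_subset_local_spectrum:
  assumes T: "bounded_clinear_op T" and D: "glocal_dense T"
    and \<phi>: "\<phi> \<in> cdual" and nz: "\<phi> \<noteq> (\<lambda>x. 0)"
  shows "adj_spectrum T \<subseteq> adj_local_spectrum T \<phi>"
  using adj_glocal_subspace_eq_zero[OF T D closed_adj_local_spectrum _ _
      mem_adj_glocal_subspace_local_spectrum[OF T D \<phi>]] adj_spectrum_subset_op_spectrum[OF T] nz
  by blast

lemma adj_glocal_subspace_proper_eq_zero:
  assumes T: "bounded_clinear_op T" and D: "glocal_dense T"
    and F: "closed F" "F \<subset> adj_spectrum T"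
  shows "adj_glocal_subspace T F = {\<lambda>x. 0}"
proof -
  obtain \<mu> where "\<mu> \<in> adj_spectrum T" "\<mu> \<notin> F" using F(2) by blast
  then have "\<mu> \<in> op_spectrum T" "\<mu> \<notin> F" using adj_spectrum_subset_op_spectrum[OF T] by auto
  then show ?thesis
    using adj_glocal_subspace_eq_zero[OF T D F(1)] zero_in_adj_glocal_subspace[OF F(1)] by blast
qed

lemma adj_point_spectrum_empty:
  assumes T: "bounded_clinear_op T" and D: "glocal_dense T"
    and ns: "\<not> (\<exists>z. adj_spectrum T = {z})"
  shows "adj_point_spectrum T = {}"
proof (rule ccontr)
  assume "adj_point_spectrum T \<noteq> {}"
  then obtain z \<psi> where \<psi>: "\<psi> \<in> cdual" "\<psi> \<noteq> (\<lambda>x. 0)" "dshift (adj T) z \<psi> = (\<lambda>x. 0)"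
    by (auto simp: adj_point_spectrum_def)
  have "z \<in> adj_spectrum T" by (rule eigenvalue_in_adj_spectrum[OF \<psi>(1,3,2)])
  then obtain \<mu> where "\<mu> \<in> adj_spectrum T" "\<mu> \<noteq> z" using ns by blast
  then have "\<mu> \<in> op_spectrum T" "\<mu> \<notin> {z}" using adj_spectrum_subset_op_spectrum[OF T] by auto
  then have "\<psi> = (\<lambda>x. 0)"
    by (rule adj_glocal_subspace_eq_zero[OF T D closed_singleton _ _
          eigenvector_in_adj_glocal_subspace[OF \<psi>(1,3)]])
  then show False using \<psi> by simp
qed

section \<open>Neumann series in the dual\<close>

lemma geometric_dominated_series:
  fixes f :: "nat \<Rightarrow> complex"
  assumes b: "\<And>n. cmod (f n) \<le> q ^ n * c" and q: "0 \<le> q" "q < 1"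
  shows "summable f" "cmod (suminf f) \<le> c / (1 - q)"
proof -
  have g: "summable (\<lambda>n. q ^ n * c)"
    by (rule summable_mult2[OF summable_geometric]) (use q in simp)
  have sn: "summable (\<lambda>n. norm (f n))"
    by (rule summable_comparison_test[OF _ g]) (use b in auto)
  then show "summable f" by (rule summable_norm_cancel)
  have "cmod (suminf f) \<le> (\<Sum>n. norm (f n))" by (rule summable_norm[OF sn])
  also have "\<dots> \<le> (\<Sum>n. q ^ n * c)" by (rule suminf_le[OF b sn g])
  also have "\<dots> = c / (1 - q)" using q by (simp add: suminf_mult2[symmetric] suminf_geometric)
  finally show "cmod (suminf f) \<le> c / (1 - q)" .
qed

lemma geometric_dominated_series_tail:
  fixes f :: "nat \<Rightarrow> complex"
  assumes b: "\<And>n. cmod (f n) \<le> q ^ n * c" and q: "0 \<le> q" "q < 1"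
  shows "cmod (suminf f - (\<Sum>i<m. f i)) \<le> q ^ m * c / (1 - q)"
proof -
  have "suminf f - (\<Sum>i<m. f i) = (\<Sum>n. f (n + m))"
    by (rule suminf_minus_initial_segment[OF geometric_dominated_series(1)[OF b q], symmetric])
  moreover have "cmod (\<Sum>n. f (n + m)) \<le> q ^ m * c / (1 - q)"
  proof (rule geometric_dominated_series(2)[OF _ q])
    show "cmod (f (n + m)) \<le> q ^ n * (q ^ m * c)" for n
      using b[of "n + m"] by (simp add: power_add mult.assoc)
  qed
  ultimately show ?thesis by simp
qed

lemma cdual_suminf:
  assumes c: "\<And>n. c n \<in> cdual" and b: "\<And>n. dnorm (c n) \<le> C * q ^ n" and q: "0 \<le> q" "q < 1"
  shows "(\<lambda>x. \<Sum>n. c n x) \<in> cdual" "dnorm (\<lambda>x. \<Sum>n. c n x) \<le> C / (1 - q)"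
    "summable (\<lambda>n. c n x)"
proof -
  have C: "0 \<le> C" using b[of 0] dnorm_nonneg[OF c[of 0]] by simp
  have ev: "cmod (c n x) \<le> q ^ n * (C * norm x)" for n x
    using cdual_norm_le[OF c, of n x] mult_right_mono[OF b norm_ge_zero, of n x]
    by (simp add: algebra_simps)
  have sm: "summable (\<lambda>n. c n x)" for x by (rule geometric_dominated_series(1)[OF ev q])
  then show "summable (\<lambda>n. c n x)" .
  have bound: "cmod (\<Sum>n. c n x) \<le> C / (1 - q) * norm x" for x
    using geometric_dominated_series(2)[OF ev q, of x] by simp
  show "(\<lambda>x. \<Sum>n. c n x) \<in> cdual"
  proof (rule cdualI[OF _ _ bound])
    show "(\<Sum>n. c n (x + y)) = (\<Sum>n. c n x) + (\<Sum>n. c n y)" for x y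
      by (simp add: cdual_add[OF c] suminf_add[OF sm sm])
    show "(\<Sum>n. c n (scaleC d x)) = d * (\<Sum>n. c n x)" for d x
      by (simp add: cdual_scaleC[OF c] suminf_mult[OF sm])
  qed
  show "dnorm (\<lambda>x. \<Sum>n. c n x) \<le> C / (1 - q)"
    by (rule dnorm_le[OF _ bound]) (use C q in simp)
qed

lemma dsubspace_plus: "dsubspace V \<Longrightarrow> \<phi> \<in> V \<Longrightarrow> \<psi> \<in> V \<Longrightarrow> (\<lambda>x. \<phi> x + \<psi> x) \<in> V"
  by (simp add: dsubspace_def)

lemma dsubspace_mult: "dsubspace V \<Longrightarrow> \<phi> \<in> V \<Longrightarrow> (\<lambda>x. c * \<phi> x) \<in> V"
  by (simp add: dsubspace_def)

lemma dsubspace_zero: "dsubspace V \<Longrightarrow> (\<lambda>x. 0) \<in> V"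
  by (simp add: dsubspace_def)

lemma dsubspace_cdual: "dsubspace V \<Longrightarrow> \<phi> \<in> V \<Longrightarrow> \<phi> \<in> cdual"
  by (auto simp: dsubspace_def)

lemma dsubspace_diff:
  assumes V: "dsubspace V" and "\<phi> \<in> V" "\<psi> \<in> V" shows "(\<lambda>x. \<phi> x - \<psi> x) \<in> V"
  using dsubspace_plus[OF V \<open>\<phi> \<in> V\<close> dsubspace_mult[OF V \<open>\<psi> \<in> V\<close>, of "-1"]] by simp

locale dual_contraction =
  fixes V :: "('a::complex_banach \<Rightarrow> complex) set" and B :: "('a \<Rightarrow> complex) \<Rightarrow> ('a \<Rightarrow> complex)"
    and q :: real
  assumes subspace: "dsubspace V" and closed: "dclosed V"
    and maps: "\<And>\<phi>. \<phi> \<in> V \<Longrightarrow> B \<phi> \<in> V"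
    and additive: "\<And>\<phi> \<psi>. \<phi> \<in> V \<Longrightarrow> \<psi> \<in> V \<Longrightarrow> B (\<lambda>x. \<phi> x + \<psi> x) = (\<lambda>x. B \<phi> x + B \<psi> x)"
    and contraction: "\<And>\<phi>. \<phi> \<in> V \<Longrightarrow> dnorm (B \<phi>) \<le> q * dnorm \<phi>"
    and q: "0 \<le> q" "q < 1"
begin

definition neumann :: "('a \<Rightarrow> complex) \<Rightarrow> ('a \<Rightarrow> complex)" where
  "neumann \<phi> = (\<lambda>x. \<Sum>n. (B ^^ n) \<phi> x)"

definition partial_neumann :: "('a \<Rightarrow> complex) \<Rightarrow> nat \<Rightarrow> ('a \<Rightarrow> complex)" where
  "partial_neumann \<phi> m = (\<lambda>x. \<Sum>i<m. (B ^^ i) \<phi> x)"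

lemma in_cdual: "\<phi> \<in> V \<Longrightarrow> \<phi> \<in> cdual"
  by (rule dsubspace_cdual[OF subspace])

lemma zero: "B (\<lambda>x. 0) = (\<lambda>x. 0)"
  using additive[OF dsubspace_zero[OF subspace] dsubspace_zero[OF subspace]]
  by (metis add_cancel_right_right add_0)

lemma minus: "\<phi> \<in> V \<Longrightarrow> \<psi> \<in> V \<Longrightarrow> B (\<lambda>x. \<phi> x - \<psi> x) = (\<lambda>x. B \<phi> x - B \<psi> x)"
  using additive[of "\<lambda>x. \<phi> x - \<psi> x" \<psi>] dsubspace_diff[OF subspace]
  by (metis (no_types, lifting) add_diff_cancel diff_add_cancel ext)

lemma power_mem: "\<phi> \<in> V \<Longrightarrow> (B ^^ n) \<phi> \<in> V"
  by (induction n) (auto intro: maps)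

lemma dnorm_power_le: "\<phi> \<in> V \<Longrightarrow> dnorm ((B ^^ n) \<phi>) \<le> dnorm \<phi> * q ^ n"
proof (induction n)
  case (Suc n)
  have "dnorm ((B ^^ Suc n) \<phi>) \<le> q * dnorm ((B ^^ n) \<phi>)"
    using contraction[OF power_mem[OF Suc.prems]] by simp
  also have "\<dots> \<le> q * (dnorm \<phi> * q ^ n)" by (rule mult_left_mono[OF Suc.IH[OF Suc.prems] q(1)])
  finally show ?case by (simp add: algebra_simps)
qed simp

lemma power_minus:
  "\<phi> \<in> V \<Longrightarrow> \<psi> \<in> V \<Longrightarrow> (B ^^ n) (\<lambda>x. \<phi> x - \<psi> x) = (\<lambda>x. (B ^^ n) \<phi> x - (B ^^ n) \<psi> x)"
  by (induction n) (simp_all add: minus power_mem)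

lemma neumann_cdual: "\<phi> \<in> V \<Longrightarrow> neumann \<phi> \<in> cdual"
  and dnorm_neumann_le: "\<phi> \<in> V \<Longrightarrow> dnorm (neumann \<phi>) \<le> dnorm \<phi> / (1 - q)"
  and summable_neumann: "\<phi> \<in> V \<Longrightarrow> summable (\<lambda>n. (B ^^ n) \<phi> x)"
  unfolding neumann_def
  using cdual_suminf[OF in_cdual[OF power_mem] dnorm_power_le q] by blast+

lemma partial_neumann_mem: "\<phi> \<in> V \<Longrightarrow> partial_neumann \<phi> m \<in> V"
  by (induction m)
    (simp_all add: partial_neumann_def dsubspace_zero[OF subspace] dsubspace_plus[OF subspace] power_mem)

lemma partial_neumann_tendsto:
  assumes \<phi>: "\<phi> \<in> V"
  shows "(\<lambda>m. dnorm (\<lambda>x. partial_neumann \<phi> m x - neumann \<phi> x)) \<longlonglongrightarrow> 0"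
proof (rule tendsto_sandwich[where f="\<lambda>m. 0" and h="\<lambda>m. q ^ m * dnorm \<phi> / (1 - q)"])
  have tail: "dnorm (\<lambda>x. partial_neumann \<phi> m x - neumann \<phi> x) \<le> q ^ m * dnorm \<phi> / (1 - q)" for m
  proof (rule dnorm_le)
    show "0 \<le> q ^ m * dnorm \<phi> / (1 - q)" using q dnorm_nonneg[OF in_cdual[OF \<phi>]] by simp
    fix x
    have "cmod ((B ^^ n) \<phi> x) \<le> q ^ n * (dnorm \<phi> * norm x)" for n
      using cdual_norm_le[OF in_cdual[OF power_mem[OF \<phi>]], of n x]
        mult_right_mono[OF dnorm_power_le[OF \<phi>, of n] norm_ge_zero[of x]]
      by (simp add: algebra_simps)
    then have "cmod (neumann \<phi> x - partial_neumann \<phi> m x) \<le> q ^ m * (dnorm \<phi> * norm x) / (1 - q)"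
      unfolding neumann_def partial_neumann_def by (rule geometric_dominated_series_tail[OF _ q])
    then show "cmod (partial_neumann \<phi> m x - neumann \<phi> x) \<le> q ^ m * dnorm \<phi> / (1 - q) * norm x"
      by (simp add: norm_minus_commute)
  qed
  then show "\<forall>\<^sub>F m in sequentially. dnorm (\<lambda>x. partial_neumann \<phi> m x - neumann \<phi> x) \<le> q ^ m * dnorm \<phi> / (1 - q)"
    by simp
  show "\<forall>\<^sub>F m in sequentially. 0 \<le> dnorm (\<lambda>x. partial_neumann \<phi> m x - neumann \<phi> x)"
    by (simp add: dnorm_nonneg cdual_minus in_cdual partial_neumann_mem neumann_cdual \<phi>)
  have "(\<lambda>m. q ^ m) \<longlonglongrightarrow> 0" by (rule LIMSEQ_power_zero) (use q in simp)
  then show "(\<lambda>m. q ^ m * dnorm \<phi> / (1 - q)) \<longlonglongrightarrow> 0"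
    using tendsto_mult_left_zero tendsto_divide_zero by blast
qed simp

lemma neumann_mem: "\<phi> \<in> V \<Longrightarrow> neumann \<phi> \<in> V"
  using closed partial_neumann_mem partial_neumann_tendsto neumann_cdual
  unfolding dclosed_def by blast

lemma neumann_telescope: "\<phi> \<in> V \<Longrightarrow> (\<Sum>n. (B ^^ n) \<phi> x - (B ^^ Suc n) \<phi> x) = \<phi> x"
  using telescope_sums'[OF summable_LIMSEQ_zero[OF summable_neumann]] by (simp add: sums_iff)

lemma neumann_left_inverse: "\<phi> \<in> V \<Longrightarrow> neumann (\<lambda>x. \<phi> x - B \<phi> x) = \<phi>"
proof
  fix x assume \<phi>: "\<phi> \<in> V"
  have "(B ^^ n) (\<lambda>x. \<phi> x - B \<phi> x) x = (B ^^ n) \<phi> x - (B ^^ Suc n) \<phi> x" for n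
    using power_minus[OF \<phi> maps[OF \<phi>], of n] by (simp add: funpow_swap1)
  then show "neumann (\<lambda>x. \<phi> x - B \<phi> x) x = \<phi> x"
    unfolding neumann_def using neumann_telescope[OF \<phi>] by simp
qed

lemma apply_neumann: "\<phi> \<in> V \<Longrightarrow> B (neumann \<phi>) x = (\<Sum>n. (B ^^ Suc n) \<phi> x)"
proof -
  assume \<phi>: "\<phi> \<in> V"
  have Bs: "B (partial_neumann \<phi> m) x = (\<Sum>i<m. (B ^^ Suc i) \<phi> x)" for m
  proof (induction m)
    case (Suc m)
    have "partial_neumann \<phi> (Suc m) = (\<lambda>x. partial_neumann \<phi> m x + (B ^^ m) \<phi> x)"
      by (simp add: partial_neumann_def)
    then show ?case using additive[OF partial_neumann_mem[OF \<phi>] power_mem[OF \<phi>]] Suc by simp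
  qed (simp add: partial_neumann_def zero)
  have "(\<lambda>m. B (partial_neumann \<phi> m) x - B (neumann \<phi>) x) \<longlonglongrightarrow> 0"
  proof (rule Lim_null_comparison[where g="\<lambda>m. q * dnorm (\<lambda>x. partial_neumann \<phi> m x - neumann \<phi> x) * norm x"])
    show "\<forall>\<^sub>F m in sequentially. norm (B (partial_neumann \<phi> m) x - B (neumann \<phi>) x)
        \<le> q * dnorm (\<lambda>x. partial_neumann \<phi> m x - neumann \<phi> x) * norm x"
    proof (rule always_eventually, rule allI)
      fix m
      have d: "(\<lambda>x. partial_neumann \<phi> m x - neumann \<phi> x) \<in> V"
        by (rule dsubspace_diff[OF subspace partial_neumann_mem[OF \<phi>] neumann_mem[OF \<phi>]])
      have "B (partial_neumann \<phi> m) x - B (neumann \<phi>) x = B (\<lambda>x. partial_neumann \<phi> m x - neumann \<phi> x) x"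
        using minus[OF partial_neumann_mem[OF \<phi>] neumann_mem[OF \<phi>]] by simp
      also have "cmod \<dots> \<le> dnorm (B (\<lambda>x. partial_neumann \<phi> m x - neumann \<phi> x)) * norm x"
        by (rule cdual_norm_le[OF in_cdual[OF maps[OF d]]])
      also have "\<dots> \<le> q * dnorm (\<lambda>x. partial_neumann \<phi> m x - neumann \<phi> x) * norm x"
        by (rule mult_right_mono[OF contraction[OF d] norm_ge_zero])
      finally show "norm (B (partial_neumann \<phi> m) x - B (neumann \<phi>) x)
        \<le> q * dnorm (\<lambda>x. partial_neumann \<phi> m x - neumann \<phi> x) * norm x" .
    qed
    show "(\<lambda>m. q * dnorm (\<lambda>x. partial_neumann \<phi> m x - neumann \<phi> x) * norm x) \<longlonglongrightarrow> 0"
      using tendsto_mult_left_zero[OF tendsto_mult_right_zero[OF partial_neumann_tendsto[OF \<phi>]]] by simp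
  qed
  then have "(\<lambda>m. B (partial_neumann \<phi> m) x) \<longlonglongrightarrow> B (neumann \<phi>) x" by (simp add: LIM_zero_iff)
  moreover have "summable (\<lambda>n. (B ^^ Suc n) \<phi> x)"
    using summable_Suc_iff[of "\<lambda>n. (B ^^ n) \<phi> x"] summable_neumann[OF \<phi>] by (simp only:)
  ultimately show ?thesis
    using summable_LIMSEQ Bs LIMSEQ_unique by fastforce
qed

lemma neumann_right_inverse: "\<phi> \<in> V \<Longrightarrow> (\<lambda>x. neumann \<phi> x - B (neumann \<phi>) x) = \<phi>"
proof
  fix x assume \<phi>: "\<phi> \<in> V"
  have "summable (\<lambda>n. (B ^^ Suc n) \<phi> x)"
    using summable_Suc_iff[of "\<lambda>n. (B ^^ n) \<phi> x"] summable_neumann[OF \<phi>] by (simp only:)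
  then have "neumann \<phi> x - B (neumann \<phi>) x = (\<Sum>n. (B ^^ n) \<phi> x - (B ^^ Suc n) \<phi> x)"
    unfolding neumann_def apply_neumann[OF \<phi>, unfolded neumann_def]
    by (rule suminf_diff[OF summable_neumann[OF \<phi>]])
  then show "neumann \<phi> x - B (neumann \<phi>) x = \<phi> x"
    by (simp only: neumann_telescope[OF \<phi>])
qed

end

section \<open>Resolvents on invariant subspaces\<close>

definition adj_invariant_subspace :: "('a::complex_banach \<Rightarrow> 'a) \<Rightarrow> ('a \<Rightarrow> complex) set \<Rightarrow> bool" where
  "adj_invariant_subspace T V \<longleftrightarrow> dsubspace V \<and> dclosed V \<and> (\<forall>\<phi>\<in>V. adj T \<phi> \<in> V)"

lemma adj_invariant_subspace_cdual: "bounded_clinear_op T \<Longrightarrow> adj_invariant_subspace T cdual"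
  unfolding adj_invariant_subspace_def dsubspace_def dclosed_def
  by (auto intro: cdual_plus cdual_mult cdual_adj)

lemma adj_invariant_subspaceD:
  assumes "adj_invariant_subspace T V"
  shows "dsubspace V" "dclosed V" "\<And>\<phi>. \<phi> \<in> V \<Longrightarrow> adj T \<phi> \<in> V" "\<And>\<phi>. \<phi> \<in> V \<Longrightarrow> \<phi> \<in> cdual"
  using assms dsubspace_cdual by (auto simp: adj_invariant_subspace_def)

lemma dshift_mem: "adj_invariant_subspace T V \<Longrightarrow> a \<in> V \<Longrightarrow> dshift (adj T) w a \<in> V"
  unfolding dshift_def
  by (intro dsubspace_diff dsubspace_mult adj_invariant_subspaceD) auto

lemma not_in_dspectrum_onE:
  assumes "w \<notin> dspectrum_on V (adj T)"
  obtains S K where "\<And>\<phi>. \<phi> \<in> V \<Longrightarrow> S \<phi> \<in> V" "\<And>\<phi>. \<phi> \<in> V \<Longrightarrow> dnorm (S \<phi>) \<le> K * dnorm \<phi>"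
    "\<And>\<phi>. \<phi> \<in> V \<Longrightarrow> S (dshift (adj T) w \<phi>) = \<phi>" "\<And>\<phi>. \<phi> \<in> V \<Longrightarrow> dshift (adj T) w (S \<phi>) = \<phi>"
  using assms unfolding dspectrum_on_def by blast

lemma not_in_dspectrum_onI:
  assumes "\<And>\<phi>. \<phi> \<in> V \<Longrightarrow> S \<phi> \<in> V" "\<And>\<phi>. \<phi> \<in> V \<Longrightarrow> dnorm (S \<phi>) \<le> K * dnorm \<phi>"
    "\<And>\<phi>. \<phi> \<in> V \<Longrightarrow> S (dshift (adj T) w \<phi>) = \<phi>" "\<And>\<phi>. \<phi> \<in> V \<Longrightarrow> dshift (adj T) w (S \<phi>) = \<phi>"
  shows "w \<notin> dspectrum_on V (adj T)"
proof -
  have "\<exists>S. (\<forall>\<phi>\<in>V. S \<phi> \<in> V) \<and> (\<exists>K. \<forall>\<phi>\<in>V. dnorm (S \<phi>) \<le> K * dnorm \<phi>) \<and>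
       (\<forall>\<phi>\<in>V. S (dshift (adj T) w \<phi>) = \<phi>) \<and> (\<forall>\<phi>\<in>V. dshift (adj T) w (S \<phi>) = \<phi>)"
    using assms by blast
  then show ?thesis unfolding dspectrum_on_def by simp
qed

lemma dshift_inj:
  assumes "w \<notin> dspectrum_on V (adj T)" "a \<in> V" "b \<in> V" "dshift (adj T) w a = dshift (adj T) w b"
  shows "a = b"
  using assms by (elim not_in_dspectrum_onE) metis

definition dresolvent ::
  "('a::complex_banach \<Rightarrow> complex) set \<Rightarrow> ('a \<Rightarrow> 'a) \<Rightarrow> complex \<Rightarrow> ('a \<Rightarrow> complex) \<Rightarrow> ('a \<Rightarrow> complex)" where
  "dresolvent V T w \<psi> = (THE \<eta>. \<eta> \<in> V \<and> dshift (adj T) w \<eta> = \<psi>)"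

lemma dresolvent:
  assumes w: "w \<notin> dspectrum_on V (adj T)" and \<psi>: "\<psi> \<in> V"
  shows dresolvent_mem: "dresolvent V T w \<psi> \<in> V"
    and dshift_dresolvent: "dshift (adj T) w (dresolvent V T w \<psi>) = \<psi>"
proof -
  obtain S where S: "\<And>\<phi>. \<phi> \<in> V \<Longrightarrow> S \<phi> \<in> V" "\<And>\<phi>. \<phi> \<in> V \<Longrightarrow> dshift (adj T) w (S \<phi>) = \<phi>"
    using w by (elim not_in_dspectrum_onE) metis
  have "\<exists>!\<eta>. \<eta> \<in> V \<and> dshift (adj T) w \<eta> = \<psi>"
    using S \<psi> dshift_inj[OF w] by metis
  then have "dresolvent V T w \<psi> \<in> V \<and> dshift (adj T) w (dresolvent V T w \<psi>) = \<psi>"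
    unfolding dresolvent_def by (rule theI')
  then show "dresolvent V T w \<psi> \<in> V" "dshift (adj T) w (dresolvent V T w \<psi>) = \<psi>" by auto
qed

lemma dresolvent_unique:
  assumes w: "w \<notin> dspectrum_on V (adj T)" and \<psi>: "\<psi> \<in> V"
    and \<eta>: "\<eta> \<in> V" "dshift (adj T) w \<eta> = \<psi>"
  shows "dresolvent V T w \<psi> = \<eta>"
  using dshift_inj[OF w dresolvent_mem[OF w \<psi>] \<eta>(1)] dshift_dresolvent[OF w \<psi>] \<eta>(2) by simp

lemma dresolvent_dshift:
  assumes "adj_invariant_subspace T V" "w \<notin> dspectrum_on V (adj T)" "\<phi> \<in> V"
  shows "dresolvent V T w (dshift (adj T) w \<phi>) = \<phi>"
  by (rule dresolvent_unique[OF assms(2) dshift_mem[OF assms(1,3)] assms(3) refl])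

lemma dresolvent_bounded:
  assumes V: "dsubspace V" and w: "w \<notin> dspectrum_on V (adj T)"
  obtains K where "K > 0" "\<And>\<psi>. \<psi> \<in> V \<Longrightarrow> dnorm (dresolvent V T w \<psi>) \<le> K * dnorm \<psi>"
proof -
  obtain S K where S: "\<And>\<phi>. \<phi> \<in> V \<Longrightarrow> S \<phi> \<in> V" "\<And>\<phi>. \<phi> \<in> V \<Longrightarrow> dnorm (S \<phi>) \<le> K * dnorm \<phi>"
    "\<And>\<phi>. \<phi> \<in> V \<Longrightarrow> dshift (adj T) w (S \<phi>) = \<phi>"
    using w by (elim not_in_dspectrum_onE) metis
  show ?thesis
  proof (rule that[of "max K 1"])
    fix \<psi> assume \<psi>: "\<psi> \<in> V"
    have "dnorm (dresolvent V T w \<psi>) \<le> K * dnorm \<psi>"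
      using dresolvent_unique[OF w \<psi> S(1,3)[OF \<psi>]] S(2)[OF \<psi>] by simp
    also have "\<dots> \<le> max K 1 * dnorm \<psi>"
      by (rule mult_right_mono) (use dnorm_nonneg[OF dsubspace_cdual[OF V \<psi>]] in auto)
    finally show "dnorm (dresolvent V T w \<psi>) \<le> max K 1 * dnorm \<psi>" .
  qed simp
qed

lemma dresolvent_plus:
  assumes V: "adj_invariant_subspace T V" and w: "w \<notin> dspectrum_on V (adj T)" and a: "a \<in> V" "b \<in> V"
  shows "dresolvent V T w (\<lambda>x. a x + b x) = (\<lambda>x. dresolvent V T w a x + dresolvent V T w b x)"
  using adj_invariant_subspaceD(1)[OF V] a
  by (intro dresolvent_unique[OF w])
    (simp_all add: dsubspace_plus dresolvent_mem[OF w] dshift_plus dshift_dresolvent[OF w])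

text \<open>Here \<open>T* - w = A (I - B)\<close> on \<open>V\<close> with \<open>P\<close> a bounded inverse of \<open>A\<close>; the resolvent is
\<open>(I - B)\<^sup>-\<^sup>1 P\<close>.\<close>

lemma not_in_dspectrum_on_factor:
  assumes B: "dual_contraction V B q"
    and A: "\<And>\<eta>. \<eta> \<in> V \<Longrightarrow> dshift (adj T) w \<eta> = A (\<lambda>x. \<eta> x - B \<eta> x)"
    and P: "\<And>\<psi>. \<psi> \<in> V \<Longrightarrow> P \<psi> \<in> V" "\<And>\<psi>. \<psi> \<in> V \<Longrightarrow> dnorm (P \<psi>) \<le> K * dnorm \<psi>"
      "\<And>\<psi>. \<psi> \<in> V \<Longrightarrow> A (P \<psi>) = \<psi>" "\<And>\<eta>. \<eta> \<in> V \<Longrightarrow> P (A \<eta>) = \<eta>"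
  shows "w \<notin> dspectrum_on V (adj T)"
    and "\<And>\<psi>. \<psi> \<in> V \<Longrightarrow> dnorm (dresolvent V T w \<psi>) \<le> K / (1 - q) * dnorm \<psi>"
proof -
  interpret dual_contraction V B q by (rule B)
  define S where "S \<psi> = neumann (P \<psi>)" for \<psi>
  have SV: "S \<psi> \<in> V" if "\<psi> \<in> V" for \<psi> unfolding S_def by (rule neumann_mem[OF P(1)[OF that]])
  have Sb: "dnorm (S \<psi>) \<le> K / (1 - q) * dnorm \<psi>" if \<psi>: "\<psi> \<in> V" for \<psi>
  proof -
    have "dnorm (S \<psi>) \<le> dnorm (P \<psi>) / (1 - q)"
      unfolding S_def by (rule dnorm_neumann_le[OF P(1)[OF \<psi>]])
    also have "\<dots> \<le> K * dnorm \<psi> / (1 - q)" by (rule divide_right_mono[OF P(2)[OF \<psi>]]) (use q in simp)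
    finally show ?thesis by simp
  qed
  have right: "dshift (adj T) w (S \<psi>) = \<psi>" if \<psi>: "\<psi> \<in> V" for \<psi>
    using A[OF SV[OF \<psi>]] neumann_right_inverse[OF P(1)[OF \<psi>]] P(3)[OF \<psi>] by (simp add: S_def)
  have left: "S (dshift (adj T) w \<phi>) = \<phi>" if \<phi>: "\<phi> \<in> V" for \<phi>
    using P(4)[OF dsubspace_diff[OF subspace \<phi> maps[OF \<phi>]]] neumann_left_inverse[OF \<phi>]
    by (simp add: S_def A[OF \<phi>])
  show w: "w \<notin> dspectrum_on V (adj T)" by (rule not_in_dspectrum_onI[OF SV Sb left right])
  show "dnorm (dresolvent V T w \<psi>) \<le> K / (1 - q) * dnorm \<psi>" if "\<psi> \<in> V" for \<psi>
    using dresolvent_unique[OF w that SV[OF that] right[OF that]] Sb[OF that] by simp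
qed

lemma dresolvent_perturb:
  assumes V: "adj_invariant_subspace T V" and z: "z \<notin> dspectrum_on V (adj T)"
    and K: "K > 0" and Kb: "\<And>\<psi>. \<psi> \<in> V \<Longrightarrow> dnorm (dresolvent V T z \<psi>) \<le> K * dnorm \<psi>"
    and wz: "cmod (w - z) \<le> 1 / (2 * K)"
  shows "w \<notin> dspectrum_on V (adj T)"
    and "\<And>\<psi>. \<psi> \<in> V \<Longrightarrow> dnorm (dresolvent V T w \<psi>) \<le> (2 * K) * dnorm \<psi>"
proof -
  note d = adj_invariant_subspaceD[OF V]
  define B where "B \<phi> = (\<lambda>x. (w - z) * dresolvent V T z \<phi> x)" for \<phi>
  have C: "dual_contraction V B (1/2)"
  proof
    show "B \<phi> \<in> V" if "\<phi> \<in> V" for \<phi>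
      unfolding B_def by (rule dsubspace_mult[OF d(1) dresolvent_mem[OF z that]])
    show "B (\<lambda>x. \<phi> x + \<psi> x) = (\<lambda>x. B \<phi> x + B \<psi> x)" if "\<phi> \<in> V" "\<psi> \<in> V" for \<phi> \<psi>
      unfolding B_def by (simp add: dresolvent_plus[OF V z that] algebra_simps)
    show "dnorm (B \<phi>) \<le> (1/2) * dnorm \<phi>" if \<phi>: "\<phi> \<in> V" for \<phi>
    proof -
      have rc: "dresolvent V T z \<phi> \<in> cdual" by (rule d(4)[OF dresolvent_mem[OF z \<phi>]])
      have "dnorm (B \<phi>) \<le> cmod (w - z) * dnorm (dresolvent V T z \<phi>)"
        unfolding B_def by (rule dnorm_mult_le[OF rc])
      also have "\<dots> \<le> (1 / (2 * K)) * (K * dnorm \<phi>)"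
        by (rule mult_mono[OF wz Kb[OF \<phi>]]) (use K dnorm_nonneg[OF rc] in auto)
      finally show ?thesis using K by simp
    qed
  qed (use d in auto)
  have shift: "dshift (adj T) w \<eta> = dshift (adj T) z (\<lambda>x. \<eta> x - B \<eta> x)" if \<eta>: "\<eta> \<in> V" for \<eta>
    using dshift_change[of T w \<eta> z]
    by (simp add: B_def dshift_diff dshift_mult dshift_dresolvent[OF z \<eta>])
  show "w \<notin> dspectrum_on V (adj T)"
    by (rule not_in_dspectrum_on_factor(1)[where A="dshift (adj T) z" and P="dresolvent V T z",
          OF C shift dresolvent_mem[OF z] Kb dshift_dresolvent[OF z] dresolvent_dshift[OF V z]])
  show "dnorm (dresolvent V T w \<psi>) \<le> (2 * K) * dnorm \<psi>" if "\<psi> \<in> V" for \<psi>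
    using not_in_dspectrum_on_factor(2)[where A="dshift (adj T) z" and P="dresolvent V T z",
          OF C shift dresolvent_mem[OF z] Kb dshift_dresolvent[OF z] dresolvent_dshift[OF V z] that]
    by simp
qed

lemma not_in_dspectrum_on_large:
  assumes T: "bounded_clinear_op T" and V: "adj_invariant_subspace T V" and w: "onorm T < cmod w"
  shows "w \<notin> dspectrum_on V (adj T)"
proof -
  note d = adj_invariant_subspaceD[OF V]
  have w0: "w \<noteq> 0" using w bounded_clinear_op_onorm_nonneg[OF T] by auto
  define B where "B \<phi> = (\<lambda>x. (1 / w) * adj T \<phi> x)" for \<phi>
  have C: "dual_contraction V B (onorm T / cmod w)"
  proof
    show "B \<phi> \<in> V" if "\<phi> \<in> V" for \<phi> unfolding B_def by (rule dsubspace_mult[OF d(1) d(3)[OF that]])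
    show "B (\<lambda>x. \<phi> x + \<psi> x) = (\<lambda>x. B \<phi> x + B \<psi> x)" for \<phi> \<psi>
      unfolding B_def by (simp add: adj_def algebra_simps)
    show "dnorm (B \<phi>) \<le> onorm T / cmod w * dnorm \<phi>" if \<phi>: "\<phi> \<in> V" for \<phi>
    proof -
      have "dnorm (B \<phi>) \<le> cmod (1 / w) * dnorm (adj T \<phi>)"
        unfolding B_def by (rule dnorm_mult_le[OF cdual_adj[OF T d(4)[OF \<phi>]]])
      also have "\<dots> \<le> cmod (1 / w) * (onorm T * dnorm \<phi>)"
        by (rule mult_left_mono[OF dnorm_adj_le[OF T d(4)[OF \<phi>]] norm_ge_zero])
      finally show ?thesis by (simp add: norm_divide)
    qed
    show "onorm T / cmod w < 1" using w w0 by (simp add: divide_less_eq)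
  qed (use d w bounded_clinear_op_onorm_nonneg[OF T] in auto)
  have shift: "dshift (adj T) w \<eta> = (\<lambda>x. (- w) * (\<eta> x - B \<eta> x))" for \<eta>
    unfolding B_def using w0 by (simp add: dshift_def algebra_simps fun_eq_iff)
  have "(\<lambda>x. (- 1 / w) * \<psi> x) \<in> V" "dnorm (\<lambda>x. (- 1 / w) * \<psi> x) \<le> 1 / cmod w * dnorm \<psi>"
    if "\<psi> \<in> V" for \<psi>
    using dsubspace_mult[OF d(1) that] dnorm_mult_le[OF d(4)[OF that], of "- 1 / w"]
    by (simp_all only: norm_divide norm_minus_cancel norm_one)
  moreover have "(\<lambda>x. (- w) * ((- 1 / w) * \<psi> x)) = \<psi>" "(\<lambda>x. (- 1 / w) * ((- w) * \<psi> x)) = \<psi>"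
    for \<psi> :: "'a \<Rightarrow> complex"
    using w0 by (simp_all add: fun_eq_iff)
  ultimately show ?thesis
    by (intro not_in_dspectrum_on_factor(1)[where A="\<lambda>\<eta> x. (- w) * \<eta> x"
          and P="\<lambda>\<psi> x. (- 1 / w) * \<psi> x" and K="1 / cmod w", OF C shift]) simp_all
qed

lemma dresolvent_identity:
  assumes V: "adj_invariant_subspace T V" and w: "w \<notin> dspectrum_on V (adj T)"
    and w': "w' \<notin> dspectrum_on V (adj T)" and \<psi>: "\<psi> \<in> V"
  shows "(\<lambda>x. dresolvent V T w \<psi> x - dresolvent V T w' \<psi> x)
       = (\<lambda>x. (w - w') * dresolvent V T w (dresolvent V T w' \<psi>) x)"
proof (rule dshift_inj[OF w])
  note d = adj_invariant_subspaceD(1)[OF V]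
  have r': "dresolvent V T w' \<psi> \<in> V" by (rule dresolvent_mem[OF w' \<psi>])
  show "(\<lambda>x. dresolvent V T w \<psi> x - dresolvent V T w' \<psi> x) \<in> V"
    by (rule dsubspace_diff[OF d dresolvent_mem[OF w \<psi>] r'])
  show "(\<lambda>x. (w - w') * dresolvent V T w (dresolvent V T w' \<psi>) x) \<in> V"
    by (rule dsubspace_mult[OF d dresolvent_mem[OF w r']])
  have "dshift (adj T) w (dresolvent V T w' \<psi>) = (\<lambda>x. \<psi> x - (w - w') * dresolvent V T w' \<psi> x)"
    using dshift_change[of T w "dresolvent V T w' \<psi>" w'] dshift_dresolvent[OF w' \<psi>] by simp
  then show "dshift (adj T) w (\<lambda>x. dresolvent V T w \<psi> x - dresolvent V T w' \<psi> x)
      = dshift (adj T) w (\<lambda>x. (w - w') * dresolvent V T w (dresolvent V T w' \<psi>) x)"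
    unfolding dshift_diff dshift_mult dshift_dresolvent[OF w \<psi>] dshift_dresolvent[OF w r'] by simp
qed

lemma dresolvent_difference_quotient:
  assumes V: "adj_invariant_subspace T V" and w: "w \<notin> dspectrum_on V (adj T)"
    and w0: "w0 \<notin> dspectrum_on V (adj T)" and ne: "w \<noteq> w0" and \<psi>: "\<psi> \<in> V"
  defines "R \<equiv> \<lambda>w. dresolvent V T w"
  shows "(\<lambda>x. (R w \<psi> x - R w0 \<psi> x) / (w - w0) - R w0 (R w0 \<psi>) x)
       = (\<lambda>x. (w - w0) * R w (R w0 (R w0 \<psi>)) x)"
proof -
  have \<eta>: "R w0 \<psi> \<in> V" unfolding R_def by (rule dresolvent_mem[OF w0 \<psi>])
  have i1: "R w \<psi> x - R w0 \<psi> x = (w - w0) * R w (R w0 \<psi>) x" for x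
    using fun_cong[OF dresolvent_identity[OF V w w0 \<psi>], of x] by (simp add: R_def)
  have i2: "R w (R w0 \<psi>) x - R w0 (R w0 \<psi>) x = (w - w0) * R w (R w0 (R w0 \<psi>)) x" for x
    using fun_cong[OF dresolvent_identity[OF V w w0 \<eta>], of x] by (simp add: R_def)
  show ?thesis using ne by (simp add: i1 i2 [symmetric])
qed

lemma dresolvent_local_solution:
  assumes V: "adj_invariant_subspace T V" and z: "z \<notin> dspectrum_on V (adj T)"
    and K: "K > 0" and Kb: "\<And>\<psi>. \<psi> \<in> V \<Longrightarrow> dnorm (dresolvent V T z \<psi>) \<le> K * dnorm \<psi>"
    and \<psi>: "\<psi> \<in> V"
  shows "adj_local_solution T \<psi> (ball z (1 / (2 * K))) (\<lambda>w. dresolvent V T w \<psi>)"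
proof -
  note d = adj_invariant_subspaceD[OF V]
  define U where "U = ball z (1 / (2 * K))"
  have inU: "w \<notin> dspectrum_on V (adj T)"
    "\<And>\<phi>. \<phi> \<in> V \<Longrightarrow> dnorm (dresolvent V T w \<phi>) \<le> (2 * K) * dnorm \<phi>" if "w \<in> U" for w
    using dresolvent_perturb[OF V z K Kb] that by (auto simp: U_def dist_norm norm_minus_commute)
  let ?R = "\<lambda>w. dresolvent V T w"
  have "dual_analytic_on (\<lambda>w. ?R w \<psi>) U"
  proof (rule dual_analytic_onI_quotient_bound)
    show "open U" by (simp add: U_def)
    show "?R w \<psi> \<in> cdual" if "w \<in> U" for w
      by (rule d(4)[OF dresolvent_mem[OF inU(1)[OF that] \<psi>]])
    fix w0 assume w0: "w0 \<in> U"
    have s0: "w0 \<notin> dspectrum_on V (adj T)" by (rule inU(1)[OF w0])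
    have \<eta>2: "?R w0 (?R w0 \<psi>) \<in> V" by (intro dresolvent_mem[OF s0] \<psi>)
    have "dnorm (\<lambda>x. (?R w \<psi> x - ?R w0 \<psi> x) / (w - w0) - ?R w0 (?R w0 \<psi>) x)
        \<le> 2 * K * dnorm (?R w0 (?R w0 \<psi>)) * cmod (w - w0)" if w: "w \<in> U - {w0}" for w
    proof -
      have sw: "w \<notin> dspectrum_on V (adj T)" using inU(1) w by auto
      have "dnorm (\<lambda>x. (w - w0) * ?R w (?R w0 (?R w0 \<psi>)) x)
          \<le> cmod (w - w0) * dnorm (?R w (?R w0 (?R w0 \<psi>)))"
        by (rule dnorm_mult_le[OF d(4)[OF dresolvent_mem[OF sw \<eta>2]]])
      also have "\<dots> \<le> cmod (w - w0) * (2 * K * dnorm (?R w0 (?R w0 \<psi>)))"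
        using inU(2)[OF _ \<eta>2] w by (intro mult_left_mono) auto
      finally show ?thesis
        using dresolvent_difference_quotient[OF V sw s0 _ \<psi>] w by (simp add: mult.commute)
    qed
    moreover have "eventually (\<lambda>w. w \<in> U - {w0}) (at w0)"
      by (rule eventually_at_in_open[OF _ w0]) (simp add: U_def)
    ultimately have "eventually (\<lambda>w. dnorm (\<lambda>x. (?R w \<psi> x - ?R w0 \<psi> x) / (w - w0) - ?R w0 (?R w0 \<psi>) x)
        \<le> 2 * K * dnorm (?R w0 (?R w0 \<psi>)) * cmod (w - w0)) (at w0)"
      by (simp add: eventually_mono)
    with d(4)[OF \<eta>2] show "\<exists>G\<in>cdual. \<exists>C. eventually
        (\<lambda>w. dnorm (\<lambda>x. (?R w \<psi> x - ?R w0 \<psi> x) / (w - w0) - G x) \<le> C * cmod (w - w0)) (at w0)"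
      by blast
  qed
  then show ?thesis
    using dshift_dresolvent[OF inU(1) \<psi>] by (simp add: adj_local_solution_def U_def)
qed

lemma adj_local_spectrum_subset_dspectrum_on:
  assumes V: "adj_invariant_subspace T V" and \<psi>: "\<psi> \<in> V"
  shows "adj_local_spectrum T \<psi> \<subseteq> dspectrum_on V (adj T)"
proof
  fix z assume zl: "z \<in> adj_local_spectrum T \<psi>"
  show "z \<in> dspectrum_on V (adj T)"
  proof (rule ccontr)
    assume z: "z \<notin> dspectrum_on V (adj T)"
    obtain K where K: "K > 0" "\<And>\<psi>. \<psi> \<in> V \<Longrightarrow> dnorm (dresolvent V T z \<psi>) \<le> K * dnorm \<psi>"
      using dresolvent_bounded[OF adj_invariant_subspaceD(1)[OF V] z] by metis
    have "ball z (1 / (2 * K)) \<subseteq> adj_local_resolvent T \<psi>"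
      by (rule adj_local_solution_subset_resolvent[OF dresolvent_local_solution[OF V z K \<psi>]])
    moreover have "z \<in> ball z (1 / (2 * K))" using K(1) by simp
    ultimately show False using zl unfolding adj_local_spectrum_def by blast
  qed
qed

lemma adj_local_spectrum_eq:
  assumes T: "bounded_clinear_op T" and D: "glocal_dense T"
    and \<phi>: "\<phi> \<in> cdual" and nz: "\<phi> \<noteq> (\<lambda>x. 0)"
  shows "adj_local_spectrum T \<phi> = adj_spectrum T"
  using adj_local_spectrum_subset_dspectrum_on[OF adj_invariant_subspace_cdual[OF T] \<phi>]
    adj_spectrum_subset_local_spectrum[OF T D \<phi> nz]
  by (auto simp: adj_spectrum_def)

lemma dclosed_zero: "dclosed {\<lambda>x. 0}"
  unfolding dclosed_def
proof (intro conjI allI impI)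
  fix s and \<phi> :: "'a \<Rightarrow> complex"
  assume "\<forall>n. s n \<in> {\<lambda>x. 0}" "\<phi> \<in> cdual" "(\<lambda>n. dnorm (\<lambda>x. s n x - \<phi> x)) \<longlonglongrightarrow> 0"
  then have "dnorm \<phi> = 0" by (simp add: dnorm_uminus LIMSEQ_const_iff)
  with dnorm_eq_0_iff[OF \<open>\<phi> \<in> cdual\<close>] show "\<phi> \<in> {\<lambda>x. 0}" by simp
qed simp

text \<open>Every local spectral subspace is either \<open>X*\<close> or \<open>{0}\<close>.\<close>

lemma adj_property_C_holds:
  assumes T: "bounded_clinear_op T" and D: "glocal_dense T"
  shows "adj_property_C T"
  unfolding adj_property_C_def
proof (intro allI impI)
  fix F :: "complex set"
  have "adj_local_subspace T F = (if adj_spectrum T \<subseteq> F then cdual else {\<lambda>x. 0})"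
    using adj_local_spectrum_eq[OF T D] adj_local_spectrum_zero[of T]
    by (auto simp: adj_local_subspace_def)
  moreover have "dclosed (cdual :: ('a \<Rightarrow> complex) set)" by (simp add: dclosed_def)
  ultimately show "dclosed (adj_local_subspace T F)"
    by (simp add: dclosed_zero)
qed

section \<open>Spectra of restrictions to invariant subspaces\<close>

lemma closed_dspectrum_on:
  assumes V: "adj_invariant_subspace T V"
  shows "closed (dspectrum_on V (adj T))"
proof -
  have "\<exists>e>0. ball z e \<subseteq> - dspectrum_on V (adj T)" if z: "z \<notin> dspectrum_on V (adj T)" for z
  proof -
    obtain K where K: "K > 0" "\<And>\<psi>. \<psi> \<in> V \<Longrightarrow> dnorm (dresolvent V T z \<psi>) \<le> K * dnorm \<psi>"
      using dresolvent_bounded[OF adj_invariant_subspaceD(1)[OF V] z] by metis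
    then have "ball z (1 / (2 * K)) \<subseteq> - dspectrum_on V (adj T)"
      using dresolvent_perturb(1)[OF V z K] by (auto simp: dist_norm norm_minus_commute)
    then show ?thesis using K(1) by (intro exI[of _ "1 / (2 * K)"]) auto
  qed
  then show ?thesis unfolding closed_def open_contains_ball by blast
qed

lemma dspectrum_on_subset_cball:
  assumes "bounded_clinear_op T" "adj_invariant_subspace T V"
  shows "dspectrum_on V (adj T) \<subseteq> cball 0 (onorm T)"
proof
  fix w assume "w \<in> dspectrum_on V (adj T)"
  then have "\<not> onorm T < cmod w" using not_in_dspectrum_on_large[OF assms] by blast
  then show "w \<in> cball 0 (onorm T)" by simp
qed

text \<open>A point of \<open>\<sigma>(T*|M) - \<sigma>(T*)\<close> has a neighbourhood in \<open>\<sigma>(T*|M)\<close>: near it both resolvents would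
exist and agree on \<open>M\<close>, giving a bound for the resolvent of \<open>T*|M\<close> that reaches back to the point.\<close>

lemma dspectrum_on_neighbourhood:
  assumes T: "bounded_clinear_op T" and M: "adj_invariant_subspace T M"
    and w: "w \<notin> adj_spectrum T" "w \<in> dspectrum_on M (adj T)"
  shows "w \<in> interior (dspectrum_on M (adj T))"
proof -
  have C: "adj_invariant_subspace T cdual" by (rule adj_invariant_subspace_cdual[OF T])
  have w': "w \<notin> dspectrum_on cdual (adj T)" using w(1) by (simp add: adj_spectrum_def)
  obtain K where K: "K > 0" "\<And>\<psi>. \<psi> \<in> cdual \<Longrightarrow> dnorm (dresolvent cdual T w \<psi>) \<le> K * dnorm \<psi>"
    using dresolvent_bounded[OF adj_invariant_subspaceD(1)[OF C] w'] by metis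
  have "ball w (1 / (4 * K)) \<subseteq> dspectrum_on M (adj T)"
  proof
    fix u assume u: "u \<in> ball w (1 / (4 * K))"
    show "u \<in> dspectrum_on M (adj T)"
    proof (rule ccontr)
      assume uM: "u \<notin> dspectrum_on M (adj T)"
      have "1 / (4 * K) \<le> 1 / (2 * K)" using K(1) by (intro divide_left_mono) auto
      then have d: "cmod (u - w) \<le> 1 / (2 * K)"
        using u by (auto simp: dist_norm norm_minus_commute)
      have uC: "u \<notin> dspectrum_on cdual (adj T)" by (rule dresolvent_perturb(1)[OF C w' K d])
      have bM: "dnorm (dresolvent M T u \<psi>) \<le> (2 * K) * dnorm \<psi>" if \<psi>: "\<psi> \<in> M" for \<psi>
      proof -
        note \<psi>' = adj_invariant_subspaceD(4)[OF M \<psi>]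
        have "dresolvent cdual T u \<psi> = dresolvent M T u \<psi>"
          using dresolvent_unique[OF uC \<psi>' adj_invariant_subspaceD(4)[OF M dresolvent_mem[OF uM \<psi>]]
              dshift_dresolvent[OF uM \<psi>]] .
        then show ?thesis using dresolvent_perturb(2)[OF C w' K d \<psi>'] by simp
      qed
      have "0 < 2 * K" "cmod (w - u) \<le> 1 / (2 * (2 * K))" using u K by (auto simp: dist_norm)
      then have "w \<notin> dspectrum_on M (adj T)" using dresolvent_perturb(1)[OF M uM _ bM] by blast
      then show False using w(2) by simp
    qed
  qed
  then show ?thesis using K(1) by (meson centre_in_ball interior_maximal open_ball subsetD zero_less_divide_1_iff mult_pos_pos zero_less_numeral)
qed

text \<open>A component of \<open>- S\<close> meeting \<open>S'\<close> is covered by the disjoint open sets \<open>interior S'\<close>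
and \<open>- S'\<close>, hence lies in \<open>S'\<close> and is bounded.\<close>

lemma subset_full_spectrum:
  assumes S: "closed S" and S': "closed S'" "bounded S'"
    and int: "\<And>z. z \<in> S' \<Longrightarrow> z \<notin> S \<Longrightarrow> z \<in> interior S'"
  shows "S' \<subseteq> full_spectrum S"
proof
  fix z assume z: "z \<in> S'"
  show "z \<in> full_spectrum S"
  proof (cases "z \<in> S")
    case False
    define C where "C = connected_component_set (- S) z"
    have Ccomp: "C \<in> components (- S)" and zC: "z \<in> C" and CS: "C \<subseteq> - S"
      using False by (auto simp: C_def components_iff connected_component_subset)
    have "C \<subseteq> interior S' \<union> - S'" using CS int by blast
    moreover have "interior S' \<inter> - S' \<inter> C = {}" using interior_subset by blast
    moreover have "interior S' \<inter> C \<noteq> {}" using int[OF z False] zC by blast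
    ultimately have "- S' \<inter> C = {}"
      using connectedD[OF connected_connected_component[of "- S" z, folded C_def] open_interior] S'(1)
      by blast
    then have "bounded C" using S'(2) bounded_subset by blast
    then show ?thesis using Ccomp zC by (auto simp: full_spectrum_def)
  qed (simp add: full_spectrum_def)
qed

lemma invariant_subspace_spectrum_bounds:
  assumes T: "bounded_clinear_op T" and D: "glocal_dense T"
    and M: "adj_invariant_subspace T M" and nontrivial: "M \<noteq> {\<lambda>x. 0}"
  shows "adj_spectrum T \<subseteq> dspectrum_on M (adj T)"
    and "dspectrum_on M (adj T) \<subseteq> full_spectrum (adj_spectrum T)"
proof -
  obtain \<psi> where \<psi>: "\<psi> \<in> M" "\<psi> \<noteq> (\<lambda>x. 0)"
    using nontrivial dsubspace_zero[OF adj_invariant_subspaceD(1)[OF M]] by blast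
  show "adj_spectrum T \<subseteq> dspectrum_on M (adj T)"
    using adj_local_spectrum_eq[OF T D adj_invariant_subspaceD(4)[OF M \<psi>(1)] \<psi>(2)]
      adj_local_spectrum_subset_dspectrum_on[OF M \<psi>(1)] by simp
  have "closed (adj_spectrum T)"
    unfolding adj_spectrum_def by (rule closed_dspectrum_on[OF adj_invariant_subspace_cdual[OF T]])
  moreover have "bounded (dspectrum_on M (adj T))"
    using dspectrum_on_subset_cball[OF T M] bounded_cball bounded_subset by blast
  ultimately show "dspectrum_on M (adj T) \<subseteq> full_spectrum (adj_spectrum T)"
    using subset_full_spectrum closed_dspectrum_on[OF M] dspectrum_on_neighbourhood[OF T M] by blast
qed

section \<open>The local spectral radius\<close>

lemma adj_power_cdual: "bounded_clinear_op T \<Longrightarrow> \<phi> \<in> cdual \<Longrightarrow> (adj T ^^ n) \<phi> \<in> cdual"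
  by (induction n) (auto intro: cdual_adj)

lemma dnorm_adj_power_le:
  assumes T: "bounded_clinear_op T" and \<phi>: "\<phi> \<in> cdual"
  shows "dnorm ((adj T ^^ n) \<phi>) \<le> dnorm \<phi> * onorm T ^ n"
proof (induction n)
  case (Suc n)
  have "dnorm ((adj T ^^ Suc n) \<phi>) \<le> onorm T * dnorm ((adj T ^^ n) \<phi>)"
    using dnorm_adj_le[OF T adj_power_cdual[OF T \<phi>]] by simp
  also have "\<dots> \<le> onorm T * (dnorm \<phi> * onorm T ^ n)"
    by (rule mult_left_mono[OF Suc bounded_clinear_op_onorm_nonneg[OF T]])
  finally show ?case by (simp add: algebra_simps)
qed simp

lemma adj_power_apply: "(adj T ^^ n) \<phi> (T x) = (adj T ^^ Suc n) \<phi> x"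
  by (simp add: adj_def)

lemma suminf_power_split_head:
  fixes a :: "nat \<Rightarrow> complex"
  assumes s: "summable (\<lambda>n. u ^ n * a n)" and u: "u \<noteq> 0"
  shows "(\<Sum>n. u ^ n * a n) = a 0 + u * (\<Sum>n. u ^ n * a (Suc n))"
proof -
  have s2: "summable (\<lambda>n. u ^ Suc n * a (Suc n))"
    using summable_Suc_iff[of "\<lambda>n. u ^ n * a n"] s by (simp only:)
  have "summable (\<lambda>n. inverse u * (u ^ Suc n * a (Suc n)))" by (rule summable_mult[OF s2])
  then have s3: "summable (\<lambda>n. u ^ n * a (Suc n))" using u by (simp add: field_simps)
  have "(\<Sum>n. u ^ Suc n * a (Suc n)) = (\<Sum>n. u ^ n * a n) - a 0"
    using suminf_split_head[OF s] by simp
  moreover have "(\<Sum>n. u ^ Suc n * a (Suc n)) = u * (\<Sum>n. u ^ n * a (Suc n))"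
    using suminf_mult[OF s3, of u] by (simp add: mult.assoc)
  ultimately show ?thesis by (simp add: algebra_simps)
qed

text \<open>The Neumann series \<open>-\<Sigma> z\<^sup>-\<^sup>n\<^sup>-\<^sup>1 T*\<^sup>n \<phi>\<close>, which converges as soon as \<open>\<parallel>T*\<^sup>n \<phi>\<parallel> \<le> C q\<^sup>n\<close> with
\<open>q < |z|\<close>, whether or not \<open>z\<close> lies in the resolvent set.\<close>

definition neumann_resolvent :: "('a::complex_banach \<Rightarrow> 'a) \<Rightarrow> ('a \<Rightarrow> complex) \<Rightarrow> complex \<Rightarrow> ('a \<Rightarrow> complex)" where
  "neumann_resolvent T \<phi> z = (\<lambda>x. - (1 / z) * (\<Sum>n. (1 / z) ^ n * (adj T ^^ n) \<phi> x))"

lemma neumann_resolvent: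
  assumes T: "bounded_clinear_op T" and \<phi>: "\<phi> \<in> cdual"
    and C: "\<And>n. dnorm ((adj T ^^ n) \<phi>) \<le> C * q ^ n" and q: "0 \<le> q" and z: "q < cmod z"
  shows neumann_resolvent_cdual: "neumann_resolvent T \<phi> z \<in> cdual"
    and dnorm_neumann_resolvent_le: "dnorm (neumann_resolvent T \<phi> z) \<le> C / (cmod z - q)"
    and dshift_neumann_resolvent: "dshift (adj T) z (neumann_resolvent T \<phi> z) = \<phi>"
    and summable_neumann_resolvent: "summable (\<lambda>n. (1 / z) ^ n * (adj T ^^ n) \<phi> x)"
proof -
  define u where "u = 1 / z"
  have zp: "0 < cmod z" using q z by linarith
  have nu: "cmod u = 1 / cmod z" by (simp add: u_def norm_divide)
  define q' where "q' = q * cmod u"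
  have q': "0 \<le> q'" "q' < 1" using q z zp by (auto simp: q'_def nu)
  define c where "c n = (\<lambda>x. u ^ n * (adj T ^^ n) \<phi> x)" for n
  have cc: "c n \<in> cdual" for n unfolding c_def by (rule cdual_mult[OF adj_power_cdual[OF T \<phi>]])
  have cb: "dnorm (c n) \<le> C * q' ^ n" for n
  proof -
    have "dnorm (c n) \<le> cmod (u ^ n) * dnorm ((adj T ^^ n) \<phi>)"
      unfolding c_def by (rule dnorm_mult_le[OF adj_power_cdual[OF T \<phi>]])
    also have "\<dots> \<le> cmod (u ^ n) * (C * q ^ n)" by (rule mult_left_mono[OF C norm_ge_zero])
    also have "\<dots> = C * q' ^ n" by (simp add: q'_def norm_power power_mult_distrib)
    finally show ?thesis .
  qed
  note S = cdual_suminf[OF cc cb q']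
  have e: "neumann_resolvent T \<phi> z = (\<lambda>x. (- u) * (\<lambda>x. \<Sum>n. c n x) x)"
    by (simp add: neumann_resolvent_def c_def u_def)
  show "neumann_resolvent T \<phi> z \<in> cdual" unfolding e by (rule cdual_mult[OF S(1)])
  have "dnorm (neumann_resolvent T \<phi> z) \<le> cmod (- u) * dnorm (\<lambda>x. \<Sum>n. c n x)"
    unfolding e by (rule dnorm_mult_le[OF S(1)])
  also have "\<dots> \<le> cmod u * (C / (1 - q'))" using mult_left_mono[OF S(2) norm_ge_zero[of u]] by simp
  also have "\<dots> = C / (cmod z - q)" using zp by (simp add: nu q'_def field_simps)
  finally show "dnorm (neumann_resolvent T \<phi> z) \<le> C / (cmod z - q)" .
  show sm: "summable (\<lambda>n. (1 / z) ^ n * (adj T ^^ n) \<phi> x)" for x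
    using S(3)[of x] by (simp add: c_def u_def)
  show "dshift (adj T) z (neumann_resolvent T \<phi> z) = \<phi>"
  proof
    fix x
    have "u \<noteq> 0" using zp by (auto simp: u_def)
    then have "(\<Sum>n. u ^ n * (adj T ^^ n) \<phi> x) = \<phi> x + u * (\<Sum>n. u ^ n * (adj T ^^ Suc n) \<phi> x)"
      using suminf_power_split_head[of u "\<lambda>n. (adj T ^^ n) \<phi> x"] sm[of x] by (simp add: u_def)
    then show "dshift (adj T) z (neumann_resolvent T \<phi> z) x = \<phi> x"
      using zp by (simp add: dshift_apply neumann_resolvent_def adj_power_apply u_def field_simps)
  qed
qed

lemma neumann_resolvent_beyond_onorm:
  assumes T: "bounded_clinear_op T" and \<phi>: "\<phi> \<in> cdual" and z: "onorm T < cmod z"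
  shows "neumann_resolvent T \<phi> z \<in> cdual"
    and "dnorm (neumann_resolvent T \<phi> z) \<le> dnorm \<phi> / (cmod z - onorm T)"
    and "dshift (adj T) z (neumann_resolvent T \<phi> z) = \<phi>"
  using neumann_resolvent[OF T \<phi> _ bounded_clinear_op_onorm_nonneg[OF T] z]
    dnorm_adj_power_le[OF T \<phi>] by blast+

text \<open>If \<open>\<sigma>(T*)\<close> were empty, the glued resolvent of \<open>\<phi>\<close> would be entire and, agreeing with the
Neumann series for large \<open>|z|\<close>, would vanish at infinity.\<close>

lemma adj_spectrum_nonempty:
  fixes T :: "'a::complex_banach \<Rightarrow> 'a" and \<phi> :: "'a \<Rightarrow> complex"
  assumes T: "bounded_clinear_op T" and D: "glocal_dense T"
    and \<phi>: "\<phi> \<in> cdual" and nz: "\<phi> \<noteq> (\<lambda>x. 0)"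
  shows "adj_spectrum T \<noteq> {}"
proof
  assume e: "adj_spectrum T = {}"
  have "\<phi> \<in> adj_glocal_subspace T {}"
    using mem_adj_glocal_subspace_local_spectrum[OF T D \<phi>] adj_local_spectrum_eq[OF T D \<phi> nz] e by simp
  then obtain g where g: "dual_analytic_on g UNIV" and geq: "\<And>z. dshift (adj T) z (g z) = \<phi>"
    by (auto simp: adj_glocal_subspace_def)
  have "g z x = 0" for z x
  proof (rule Liouville_weak[OF dual_analytic_on_eval_holomorphic[OF g]])
    show "((\<lambda>z. g z x) \<longlongrightarrow> 0) at_infinity"
    proof (rule tendsto_zero_at_infinity_by_bound[where R="onorm T + 1" and K="onorm T"])
      fix w :: complex assume w: "onorm T + 1 \<le> cmod w"
      then have wT: "onorm T < cmod w" by simp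
      note N = neumann_resolvent_beyond_onorm[OF T \<phi> wT]
      have "w \<notin> dspectrum_on cdual (adj T)" using e by (simp add: adj_spectrum_def)
      then have "g w = neumann_resolvent T \<phi> w"
        using dshift_inj[OF _ dual_analytic_on_cdual[OF g] N(1)] geq N(3) by simp
      then have "cmod (g w x) \<le> dnorm (neumann_resolvent T \<phi> w) * norm x"
        using cdual_norm_le[OF N(1)] by simp
      also have "\<dots> \<le> dnorm \<phi> / (cmod w - onorm T) * norm x" by (rule mult_right_mono[OF N(2) norm_ge_zero])
      finally show "cmod (g w x) \<le> dnorm \<phi> * norm x / (cmod w - onorm T)" by simp
    qed simp
  qed
  then have "\<phi> = (\<lambda>x. 0)" using geq[of 0] by (simp add: fun_eq_iff dshift_apply)
  then show False using nz by simp
qed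

lemma neumann_resolvent_eval_holomorphic:
  assumes T: "bounded_clinear_op T" and \<phi>: "\<phi> \<in> cdual"
    and C: "\<And>n. dnorm ((adj T ^^ n) \<phi>) \<le> C * q ^ n" and q: "0 < q"
  shows "(\<lambda>z. neumann_resolvent T \<phi> z x) holomorphic_on {z. q < cmod z}"
proof -
  define a where "a n = (adj T ^^ n) \<phi> x" for n
  have ab: "cmod (a n) \<le> q ^ n * (C * norm x)" for n
    using cdual_norm_le[OF adj_power_cdual[OF T \<phi>], of n x] mult_right_mono[OF C norm_ge_zero, of n x]
    by (simp add: a_def algebra_simps)
  define P where "P w = (\<Sum>n. a n * w ^ n)" for w
  have "(\<lambda>n. a n * (w - 0) ^ n) sums P w" if w: "w \<in> ball 0 (1 / q)" for w
  proof -
    have qw: "q * cmod w < 1" using w q by (simp add: field_simps)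
    have "summable (\<lambda>n. a n * w ^ n)"
    proof (rule geometric_dominated_series(1)[where q="q * cmod w" and c="C * norm x"])
      show "cmod (a n * w ^ n) \<le> (q * cmod w) ^ n * (C * norm x)" for n
        using mult_right_mono[OF ab[of n], of "cmod w ^ n"]
        by (simp add: norm_mult norm_power power_mult_distrib algebra_simps)
    qed (use qw q in auto)
    then show ?thesis by (simp add: P_def summable_sums)
  qed
  then have Ph: "P holomorphic_on ball 0 (1 / q)" by (rule power_series_holomorphic)
  have inv: "(\<lambda>z. 1 / z) holomorphic_on {z. q < cmod z}"
    by (rule holomorphic_on_divide) (use q in \<open>auto intro: holomorphic_intros\<close>)
  have "(\<lambda>z. 1 / z) ` {z. q < cmod z} \<subseteq> ball 0 (1 / q)"
  proof
    fix y assume "y \<in> (\<lambda>z. 1 / z) ` {z. q < cmod z}"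
    then obtain z where z: "q < cmod z" "y = 1 / z" by auto
    have "0 < cmod z * q" using z q by (intro mult_pos_pos) auto
    then have "1 / cmod z < 1 / q" by (rule divide_strict_left_mono[OF z(1) zero_less_one])
    then show "y \<in> ball 0 (1 / q)" using z by (simp add: norm_divide)
  qed
  then have "(P \<circ> (\<lambda>z. 1 / z)) holomorphic_on {z. q < cmod z}"
    by (rule holomorphic_on_compose_gen[OF inv Ph])
  then have "(\<lambda>z. - (1 / z) * P (1 / z)) holomorphic_on {z. q < cmod z}"
    by (intro holomorphic_on_mult holomorphic_on_minus inv) (simp add: o_def)
  then show ?thesis
    by (rule holomorphic_transform) (simp add: neumann_resolvent_def P_def a_def mult.commute)
qed

lemma neumann_resolvent_local_solution:
  assumes T: "bounded_clinear_op T" and \<phi>: "\<phi> \<in> cdual"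
    and C: "\<And>n. dnorm ((adj T ^^ n) \<phi>) \<le> C * q ^ n" and q: "0 < q"
  shows "adj_local_solution T \<phi> {z. q < cmod z} (neumann_resolvent T \<phi>)"
  unfolding adj_local_solution_def
proof
  have q0: "0 \<le> q" using q by simp
  show "dual_analytic_on (neumann_resolvent T \<phi>) {z. q < cmod z}"
  proof (rule weakly_holomorphic_imp_dual_analytic)
    show "open {z. q < cmod z}" by (rule open_Collect_less) (auto intro: continuous_intros)
    show "neumann_resolvent T \<phi> z \<in> cdual" if "z \<in> {z. q < cmod z}" for z
      using neumann_resolvent_cdual[OF T \<phi> C q0] that by simp
    show "(\<lambda>z. neumann_resolvent T \<phi> z x) holomorphic_on {z. q < cmod z}" for x
      by (rule neumann_resolvent_eval_holomorphic[OF T \<phi> C q])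
    fix z0 assume z0: "z0 \<in> {z. q < cmod z}"
    define r where "r = (cmod z0 - q) / 2"
    have r: "r > 0" using z0 by (simp add: r_def)
    have far: "q + r \<le> cmod w" if "w \<in> cball z0 r" for w
    proof -
      have "cmod (z0 - w) \<le> r" using that by (simp add: dist_norm)
      moreover have "cmod z0 - cmod w \<le> cmod (z0 - w)" by (rule norm_triangle_ineq2)
      moreover have "2 * r = cmod z0 - q" by (simp add: r_def)
      ultimately show ?thesis by linarith
    qed
    have C0: "0 \<le> C" using C[of 0] dnorm_nonneg[OF \<phi>] by simp
    have "dnorm (neumann_resolvent T \<phi> w) \<le> C / r" if w: "w \<in> cball z0 r" for w
    proof -
      have "dnorm (neumann_resolvent T \<phi> w) \<le> C / (cmod w - q)"
        using far[OF w] r by (intro dnorm_neumann_resolvent_le[OF T \<phi> C q0]) simp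
      also have "\<dots> \<le> C / r" using far[OF w] r C0 by (intro divide_left_mono) auto
      finally show ?thesis .
    qed
    moreover have "cball z0 r \<subseteq> {z. q < cmod z}" using far r by fastforce
    ultimately show "\<exists>r>0. \<exists>M. cball z0 r \<subseteq> {z. q < cmod z} \<and>
        (\<forall>w\<in>cball z0 r. dnorm (neumann_resolvent T \<phi> w) \<le> M)"
      using r by blast
  qed
  show "\<forall>z\<in>{z. q < cmod z}. dshift (adj T) z (neumann_resolvent T \<phi> z) = \<phi>"
    using dshift_neumann_resolvent[OF T \<phi> C q0] by auto
qed

lemma geometric_bound_of_limsup_root_less:
  fixes d :: "nat \<Rightarrow> real"
  assumes d0: "\<And>n. 0 \<le> d n" and lim: "limsup (\<lambda>n. ereal (root n (d n))) < ereal q"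
  shows "0 < q" "\<exists>C. \<forall>n. d n \<le> C * q ^ n"
proof -
  have "eventually (\<lambda>n. ereal (root n (d n)) < ereal q) sequentially"
    by (rule Limsup_lessD[OF lim])
  then obtain N where N: "\<And>n. n \<ge> N \<Longrightarrow> root n (d n) < q"
    by (auto simp: eventually_sequentially)
  have "0 \<le> root (Suc N) (d (Suc N))" by (rule real_root_ge_zero[OF d0])
  then show q: "0 < q" using N[of "Suc N"] by linarith
  have big: "d n \<le> q ^ n" if "n \<ge> Suc N" for n
  proof -
    have n0: "0 < n" using that by simp
    have "root n (d n) < root n (q ^ n)"
      using N[of n] that real_root_power_cancel[OF n0, of q] q by simp
    then show ?thesis using n0 by simp
  qed
  define C where "C = 1 + (\<Sum>k<Suc N. d k / q ^ k)"
  have C1: "1 \<le> C" unfolding C_def using d0 q by (simp add: sum_nonneg)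
  have "d n \<le> C * q ^ n" for n
  proof (cases "n < Suc N")
    case True
    have "d n / q ^ n \<le> (\<Sum>k<Suc N. d k / q ^ k)"
      by (rule member_le_sum) (use True d0 q in auto)
    then have "d n / q ^ n \<le> C" by (simp add: C_def)
    then show ?thesis using q by (simp add: pos_divide_le_eq)
  next
    case False
    then have "d n \<le> 1 * q ^ n" using big[of n] by simp
    also have "\<dots> \<le> C * q ^ n" using C1 q by (intro mult_right_mono) auto
    finally show ?thesis .
  qed
  then show "\<exists>C. \<forall>n. d n \<le> C * q ^ n" by blast
qed

lemma limsup_root_le_of_geometric_bound:
  fixes d :: "nat \<Rightarrow> real"
  assumes db: "\<And>n. d n \<le> M * \<rho> ^ Suc n" and M: "0 < M" and \<rho>: "0 < \<rho>"
  shows "limsup (\<lambda>n. ereal (root n (d n))) \<le> ereal \<rho>"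
proof -
  have "eventually (\<lambda>n. ereal (root n (d n)) \<le> ereal (root n (M * \<rho>) * \<rho>)) sequentially"
  proof (rule eventually_sequentiallyI[of 1])
    fix n :: nat assume "1 \<le> n"
    then have n0: "0 < n" by simp
    have "root n (d n) \<le> root n ((M * \<rho>) * \<rho> ^ n)" using db[of n] n0 by (simp add: mult.assoc)
    also have "\<dots> = root n (M * \<rho>) * \<rho>"
      using real_root_power_cancel[OF n0, of \<rho>] \<rho> by (simp add: real_root_mult)
    finally show "ereal (root n (d n)) \<le> ereal (root n (M * \<rho>) * \<rho>)" by simp
  qed
  then have "limsup (\<lambda>n. ereal (root n (d n))) \<le> limsup (\<lambda>n. ereal (root n (M * \<rho>) * \<rho>))"
    by (rule Limsup_mono)
  also have "\<dots> = ereal \<rho>"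
  proof (rule lim_imp_Limsup[OF trivial_limit_sequentially])
    have "(\<lambda>n. root n (M * \<rho>) * \<rho>) \<longlonglongrightarrow> 1 * \<rho>"
      by (intro tendsto_mult LIMSEQ_root_const tendsto_const) (use M \<rho> in simp)
    then show "(\<lambda>n. ereal (root n (M * \<rho>) * \<rho>)) \<longlonglongrightarrow> ereal \<rho>" by simp
  qed
  finally show ?thesis .
qed

lemma norm_le_adj_local_spectral_radius:
  assumes T: "bounded_clinear_op T" and D: "glocal_dense T"
    and \<phi>: "\<phi> \<in> cdual" and nz: "\<phi> \<noteq> (\<lambda>x. 0)" and \<mu>: "\<mu> \<in> adj_spectrum T"
  shows "ereal (cmod \<mu>) \<le> adj_local_spectral_radius T \<phi>"
proof (rule ccontr)
  assume "\<not> ereal (cmod \<mu>) \<le> adj_local_spectral_radius T \<phi>"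
  then obtain q where q1: "adj_local_spectral_radius T \<phi> < ereal q" and q2: "q < cmod \<mu>"
    using ereal_dense2 not_le by (metis ereal_less_eq(3))
  have d0: "0 \<le> dnorm ((adj T ^^ n) \<phi>)" for n by (rule dnorm_nonneg[OF adj_power_cdual[OF T \<phi>]])
  note G = geometric_bound_of_limsup_root_less[OF d0 q1[unfolded adj_local_spectral_radius_def]]
  then obtain C where "\<And>n. dnorm ((adj T ^^ n) \<phi>) \<le> C * q ^ n" by blast
  then have "{z. q < cmod z} \<subseteq> adj_local_resolvent T \<phi>"
    by (rule adj_local_solution_subset_resolvent[OF neumann_resolvent_local_solution[OF T \<phi> _ G(1)]])
  then have "\<mu> \<notin> adj_local_spectrum T \<phi>" using q2 by (auto simp: adj_local_spectrum_def)
  then show False using adj_local_spectrum_eq[OF T D \<phi> nz] \<mu> by simp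
qed

lemma norm_adj_spectrum_le_onorm: "bounded_clinear_op T \<Longrightarrow> \<mu> \<in> adj_spectrum T \<Longrightarrow> cmod \<mu> \<le> onorm T"
  using dspectrum_on_subset_cball[OF _ adj_invariant_subspace_cdual] by (force simp: adj_spectrum_def)

lemma bdd_above_adj_spectrum: "bounded_clinear_op T \<Longrightarrow> bdd_above (cmod ` adj_spectrum T)"
  by (rule bdd_aboveI2) (rule norm_adj_spectrum_le_onorm)

lemma adj_spectral_radius_le_local:
  fixes T :: "'a::complex_banach \<Rightarrow> 'a" and \<phi> :: "'a \<Rightarrow> complex"
  assumes T: "bounded_clinear_op T" and D: "glocal_dense T"
    and \<phi>: "\<phi> \<in> cdual" and nz: "\<phi> \<noteq> (\<lambda>x. 0)"
  shows "ereal (adj_spectral_radius T) \<le> adj_local_spectral_radius T \<phi>"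
proof -
  have ne: "adj_spectrum T \<noteq> {}" by (rule adj_spectrum_nonempty[OF T D \<phi> nz])
  have pts: "ereal (cmod \<nu>) \<le> adj_local_spectral_radius T \<phi>" if "\<nu> \<in> adj_spectrum T" for \<nu>
    by (rule norm_le_adj_local_spectral_radius[OF T D \<phi> nz that])
  show ?thesis
  proof (cases "adj_local_spectral_radius T \<phi>")
    case (real l)
    have "Sup (cmod ` adj_spectrum T) \<le> l"
      by (rule cSup_least) (use ne pts real in auto)
    then show ?thesis using real by (simp add: adj_spectral_radius_def)
  next
    case MInf then show ?thesis using pts ne by fastforce
  qed simp
qed

lemma dresolvent_cdual_local_solution:
  assumes T: "bounded_clinear_op T" and \<phi>: "\<phi> \<in> cdual" and z: "z \<notin> adj_spectrum T"
  obtains \<delta> where "\<delta> > 0" "adj_local_solution T \<phi> (ball z \<delta>) (\<lambda>w. dresolvent cdual T w \<phi>)"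
proof -
  have C: "adj_invariant_subspace T cdual" by (rule adj_invariant_subspace_cdual[OF T])
  have z': "z \<notin> dspectrum_on cdual (adj T)" using z by (simp add: adj_spectrum_def)
  obtain K where K: "K > 0" "\<And>\<psi>. \<psi> \<in> cdual \<Longrightarrow> dnorm (dresolvent cdual T z \<psi>) \<le> K * dnorm \<psi>"
    using dresolvent_bounded[OF adj_invariant_subspaceD(1)[OF C] z'] by metis
  show ?thesis by (rule that[OF _ dresolvent_local_solution[OF C z' K \<phi>]]) (use K in simp)
qed

lemma open_adj_resolvent_set: "bounded_clinear_op T \<Longrightarrow> open (- adj_spectrum T)"
  using closed_dspectrum_on[OF adj_invariant_subspace_cdual] by (auto simp: adj_spectrum_def)

lemma dresolvent_cdual_eval_holomorphic:
  assumes T: "bounded_clinear_op T" and \<phi>: "\<phi> \<in> cdual"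
  shows "(\<lambda>z. dresolvent cdual T z \<phi> x) holomorphic_on (- adj_spectrum T)"
  unfolding holomorphic_on_open[OF open_adj_resolvent_set[OF T]]
proof
  fix z assume "z \<in> - adj_spectrum T"
  then obtain \<delta> where \<delta>: "\<delta> > 0" "adj_local_solution T \<phi> (ball z \<delta>) (\<lambda>w. dresolvent cdual T w \<phi>)"
    using dresolvent_cdual_local_solution[OF T \<phi>] by blast
  have "(\<lambda>w. dresolvent cdual T w \<phi> x) holomorphic_on ball z \<delta>"
    by (rule dual_analytic_on_eval_holomorphic) (use \<delta> in \<open>simp add: adj_local_solution_def\<close>)
  then have "((\<lambda>w. dresolvent cdual T w \<phi> x) has_field_derivative
      deriv (\<lambda>w. dresolvent cdual T w \<phi> x) z) (at z)"
    using \<delta>(1) by (intro holomorphic_derivI) auto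
  then show "\<exists>f'. ((\<lambda>w. dresolvent cdual T w \<phi> x) has_field_derivative f') (at z)" ..
qed

lemma continuous_on_dnorm_dresolvent_cdual:
  assumes T: "bounded_clinear_op T" and \<phi>: "\<phi> \<in> cdual"
  shows "continuous_on (- adj_spectrum T) (\<lambda>z. dnorm (dresolvent cdual T z \<phi>))"
  unfolding continuous_on_eq_continuous_at[OF open_adj_resolvent_set[OF T]]
proof
  fix z assume "z \<in> - adj_spectrum T"
  then obtain \<delta> where \<delta>: "\<delta> > 0" "adj_local_solution T \<phi> (ball z \<delta>) (\<lambda>w. dresolvent cdual T w \<phi>)"
    using dresolvent_cdual_local_solution[OF T \<phi>] by blast
  have "continuous_on (ball z \<delta>) (\<lambda>w. dnorm (dresolvent cdual T w \<phi>))"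
    by (rule continuous_on_dnorm_dual_analytic) (use \<delta> in \<open>simp add: adj_local_solution_def\<close>)
  then show "isCont (\<lambda>w. dnorm (dresolvent cdual T w \<phi>)) z"
    using \<delta>(1) by (simp add: continuous_on_eq_continuous_at)
qed

lemma power_series_coeff_cauchy_bound:
  fixes k :: "complex \<Rightarrow> complex" and c :: "nat \<Rightarrow> complex"
  assumes hol: "k holomorphic_on ball 0 R" and e: "0 < e"
    and sums: "\<And>u. u \<in> ball 0 e \<Longrightarrow> (\<lambda>n. c n * u ^ n) sums k u"
    and s: "0 < s" "s < R" and bound: "\<And>u. cmod u = s \<Longrightarrow> cmod (k u) \<le> B"
  shows "cmod (c n) \<le> B / s ^ n"
proof -
  define F where "F = Abs_fps c"
  have Fn: "fps_nth F = c" by (simp add: F_def fun_eq_iff)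
  have "k has_fps_expansion F"
    unfolding has_fps_expansion_def
  proof
    define u0 :: complex where "u0 = of_real (e / 2)"
    have u0: "norm u0 = e / 2" using e by (simp add: u0_def)
    then have "(\<lambda>n. c n * u0 ^ n) sums k u0" using e by (intro sums) simp
    then have "norm u0 \<le> conv_radius c" by (rule conv_radius_geI[OF sums_summable])
    then show "0 < fps_conv_radius F" unfolding fps_conv_radius_def Fn using u0 e
      by (metis ereal_less(2) order_less_le_trans zero_ereal_def half_gt_zero)
    have "eventually (\<lambda>u. u \<in> ball 0 e) (nhds 0)"
      by (rule eventually_nhds_in_open) (use e in auto)
    then show "eventually (\<lambda>u. eval_fps F u = k u) (nhds 0)"
      by (rule eventually_mono) (use sums in \<open>simp add: eval_fps_def Fn sums_iff\<close>)
  qed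
  then have cn: "c n = (deriv ^^ n) k 0 / fact n"
    using fps_nth_fps_expansion[of k F n] by (simp add: Fn)
  have cauchy: "cmod ((deriv ^^ n) k 0) \<le> fact n * B / s ^ n"
  proof (rule Cauchy_inequality)
    show "k holomorphic_on ball 0 s" by (rule holomorphic_on_subset[OF hol]) (use s in auto)
    show "continuous_on (cball 0 s) k"
      by (rule continuous_on_subset[OF holomorphic_on_imp_continuous_on[OF hol]]) (use s in auto)
  qed (use s bound in auto)
  have "cmod (fact n :: complex) = fact n"
    by (metis norm_of_nat of_nat_fact)
  then have "cmod (c n) = cmod ((deriv ^^ n) k 0) / fact n" using cn by (simp add: norm_divide)
  also have "\<dots> \<le> (fact n * B / s ^ n) / fact n" by (rule divide_right_mono[OF cauchy]) simp
  also have "\<dots> = B / s ^ n" by simp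
  finally show ?thesis .
qed

lemma dresolvent_cdual_reciprocal_sums:
  fixes T :: "'a::complex_banach \<Rightarrow> 'a" and \<phi> :: "'a \<Rightarrow> complex"
  assumes T: "bounded_clinear_op T" and \<phi>: "\<phi> \<in> cdual" and u: "u \<in> ball 0 (1 / (onorm T + 1))"
  shows "(\<lambda>n. (if n = 0 then 0 else - (adj T ^^ (n - 1)) \<phi> x) * u ^ n) sums
    (if u = 0 then 0 else dresolvent cdual T (1 / u) \<phi> x)"
proof (cases "u = 0")
  case False
  have T0: "0 \<le> onorm T" by (rule bounded_clinear_op_onorm_nonneg[OF T])
  have "(onorm T + 1) * cmod u < 1" using u T0 by (simp add: field_simps)
  moreover have "(onorm T + 1) * cmod u = onorm T * cmod u + cmod u" by (simp add: distrib_right)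
  ultimately have "onorm T * cmod u < 1" using norm_ge_zero[of u] by linarith
  then have z: "onorm T < cmod (1 / u)" using False by (simp add: norm_divide field_simps)
  note N = neumann_resolvent_beyond_onorm[OF T \<phi> z]
  have "dresolvent cdual T (1 / u) \<phi> = neumann_resolvent T \<phi> (1 / u)"
    by (rule dresolvent_unique[OF not_in_dspectrum_on_large[OF T adj_invariant_subspace_cdual[OF T] z]
          \<phi> N(1) N(3)])
  moreover have "summable (\<lambda>n. u ^ n * (adj T ^^ n) \<phi> x)"
    using summable_neumann_resolvent[OF T \<phi> dnorm_adj_power_le[OF T \<phi>] T0 z] by simp
  ultimately have "(\<lambda>n. - (adj T ^^ n) \<phi> x * u ^ Suc n) sums dresolvent cdual T (1 / u) \<phi> x"
    using sums_mult[OF summable_sums, of _ "- u"] by (simp add: neumann_resolvent_def algebra_simps)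
  then have "(\<lambda>n. (\<lambda>n. (if n = 0 then 0 else - (adj T ^^ (n - 1)) \<phi> x) * u ^ n) (Suc n))
      sums dresolvent cdual T (1 / u) \<phi> x"
    by simp
  then show ?thesis using False by (subst (asm) sums_Suc_iff) simp
qed (simp add: powser_sums_zero_iff)

lemma dresolvent_cdual_reciprocal_holomorphic:
  assumes T: "bounded_clinear_op T" and \<phi>: "\<phi> \<in> cdual"
    and outside: "\<And>z. r < cmod z \<Longrightarrow> z \<notin> adj_spectrum T"
  shows "(\<lambda>u. dresolvent cdual T (1 / u) \<phi> x) holomorphic_on {u. u \<noteq> 0 \<and> r * cmod u < 1}"
proof -
  have inv: "(\<lambda>u. 1 / u) holomorphic_on {u. u \<noteq> 0 \<and> r * cmod u < 1}"
    by (rule holomorphic_on_divide) (auto intro: holomorphic_intros)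
  have "(\<lambda>u. 1 / u) ` {u. u \<noteq> 0 \<and> r * cmod u < 1} \<subseteq> - adj_spectrum T"
    using outside by (auto simp: norm_divide field_simps)
  from holomorphic_on_compose_gen[OF inv dresolvent_cdual_eval_holomorphic[OF T \<phi>] this]
  show ?thesis by (simp add: o_def)
qed

text \<open>In the variable \<open>u = 1/z\<close>, \<open>u \<mapsto> (R(1/u)\<phi>)(x)\<close> extends holomorphically across \<open>u = 0\<close> with
Taylor coefficients \<open>-(T*\<^sup>n\<^sup>-\<^sup>1\<phi>)(x)\<close> and is holomorphic for \<open>|u| < 1/r\<close>; Cauchy's inequality on
\<open>|u| = 1/\<rho>\<close> gives the bound.\<close>

lemma norm_adj_power_apply_le:
  fixes T :: "'a::complex_banach \<Rightarrow> 'a" and \<phi> :: "'a \<Rightarrow> complex"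
  assumes T: "bounded_clinear_op T" and \<phi>: "\<phi> \<in> cdual"
    and r: "0 \<le> r" and outside: "\<And>z. r < cmod z \<Longrightarrow> z \<notin> adj_spectrum T"
    and \<rho>: "r < \<rho>" and M: "\<And>z. cmod z = \<rho> \<Longrightarrow> dnorm (dresolvent cdual T z \<phi>) \<le> M"
  shows "cmod ((adj T ^^ n) \<phi> x) \<le> M * norm x * \<rho> ^ Suc n"
proof -
  define q where "q = onorm T + 1"
  have q: "0 < q" "onorm T < q" using bounded_clinear_op_onorm_nonneg[OF T] by (auto simp: q_def)
  have \<rho>0: "0 < \<rho>" using r \<rho> by linarith
  define k where "k u = (if u = 0 then 0 else dresolvent cdual T (1 / u) \<phi> x)" for u
  define c where "c n = (if n = 0 then 0 else - (adj T ^^ (n - 1)) \<phi> x)" for n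
  have sums: "(\<lambda>n. c n * u ^ n) sums k u" if "u \<in> ball 0 (1 / q)" for u
    using dresolvent_cdual_reciprocal_sums[OF T \<phi>] that by (simp add: k_def c_def q_def)
  define R where "R = 2 / (r + \<rho>)"
  have "r * cmod u < 1" if "cmod u < R" for u
  proof -
    have "r * cmod u \<le> r * R" using that r by (intro mult_left_mono) auto
    also have "r * R < 1" using r \<rho> by (simp add: R_def field_simps)
    finally show ?thesis .
  qed
  then have "ball 0 R - {0} \<subseteq> {u. u \<noteq> 0 \<and> r * cmod u < 1}" by auto
  then have "k holomorphic_on (ball 0 R - {0})"
    by (intro holomorphic_transform[OF holomorphic_on_subset[OF
          dresolvent_cdual_reciprocal_holomorphic[OF T \<phi> outside]]]) (auto simp: k_def)
  moreover have "k holomorphic_on ball 0 (1 / q)" by (rule power_series_holomorphic) (use sums in simp)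
  ultimately have "k holomorphic_on ((ball 0 R - {0}) \<union> ball 0 (1 / q))"
    by (rule holomorphic_on_Un) auto
  then have hol: "k holomorphic_on ball 0 R"
    by (rule holomorphic_on_subset) (use q in auto)
  have "cmod (c (Suc n)) \<le> (M * norm x) / (1 / \<rho>) ^ Suc n"
  proof (rule power_series_coeff_cauchy_bound[OF hol _ sums])
    show "1 / \<rho> < R" using r \<rho> by (simp add: R_def field_simps)
    fix u :: complex assume u: "cmod u = 1 / \<rho>"
    then have u0: "u \<noteq> 0" and nu: "cmod (1 / u) = \<rho>" using \<rho>0 by (auto simp: norm_divide)
    have "1 / u \<notin> dspectrum_on cdual (adj T)" using outside[of "1 / u"] nu \<rho> by (simp add: adj_spectrum_def)
    then have "cmod (k u) \<le> dnorm (dresolvent cdual T (1 / u) \<phi>) * norm x"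
      using u0 cdual_norm_le[OF dresolvent_mem[OF _ \<phi>]] by (simp add: k_def)
    also have "\<dots> \<le> M * norm x" by (rule mult_right_mono[OF M[OF nu] norm_ge_zero])
    finally show "cmod (k u) \<le> M * norm x" .
  qed (use q \<rho>0 in auto)
  then show ?thesis by (simp add: c_def power_one_over)
qed

lemma adj_local_spectral_radius_le:
  fixes T :: "'a::complex_banach \<Rightarrow> 'a" and \<phi> :: "'a \<Rightarrow> complex"
  assumes T: "bounded_clinear_op T" and D: "glocal_dense T"
    and \<phi>: "\<phi> \<in> cdual" and nz: "\<phi> \<noteq> (\<lambda>x. 0)"
  shows "adj_local_spectral_radius T \<phi> \<le> ereal (adj_spectral_radius T)"
proof (rule ereal_le_epsilon2)
  define r where "r = adj_spectral_radius T"
  obtain \<mu> where \<mu>: "\<mu> \<in> adj_spectrum T" using adj_spectrum_nonempty[OF T D \<phi> nz] by blast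
  have up: "cmod z \<le> r" if "z \<in> adj_spectrum T" for z
    unfolding r_def adj_spectral_radius_def
    by (rule cSup_upper[OF _ bdd_above_adj_spectrum[OF T]]) (use that in auto)
  have r0: "0 \<le> r" using up[OF \<mu>] norm_ge_zero[of \<mu>] by linarith
  have outside: "z \<notin> adj_spectrum T" if "r < cmod z" for z using up that by fastforce
  fix e :: real assume e: "0 < e"
  define \<rho> where "\<rho> = r + e"
  have \<rho>: "r < \<rho>" using e by (simp add: \<rho>_def)
  have "sphere 0 \<rho> \<subseteq> - adj_spectrum T" using outside \<rho> by auto
  then have "compact ((\<lambda>z. dnorm (dresolvent cdual T z \<phi>)) ` sphere 0 \<rho>)"
    by (intro compact_continuous_image continuous_on_subset[OF continuous_on_dnorm_dresolvent_cdual[OF T \<phi>]])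
      simp_all
  then have "bounded ((\<lambda>z. dnorm (dresolvent cdual T z \<phi>)) ` sphere 0 \<rho>)" by (rule compact_imp_bounded)
  then obtain M0 where "\<forall>z\<in>sphere 0 \<rho>. norm (dnorm (dresolvent cdual T z \<phi>)) \<le> M0"
    unfolding bounded_iff by blast
  then have M0: "\<And>z. z \<in> sphere 0 \<rho> \<Longrightarrow> dnorm (dresolvent cdual T z \<phi>) \<le> M0" by fastforce
  define M where "M = max M0 1"
  have "dnorm (dresolvent cdual T z \<phi>) \<le> M" if "cmod z = \<rho>" for z
    using M0[of z] that by (simp add: M_def)
  note bound = norm_adj_power_apply_le[OF T \<phi> r0 outside \<rho> this]
  have "dnorm ((adj T ^^ n) \<phi>) \<le> M * \<rho> ^ Suc n" for n
  proof (rule dnorm_le)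
    show "0 \<le> M * \<rho> ^ Suc n" using r0 \<rho> by (simp add: M_def)
    show "cmod ((adj T ^^ n) \<phi> x) \<le> M * \<rho> ^ Suc n * norm x" for x
      using bound[of n x] by (simp add: algebra_simps)
  qed
  then have "limsup (\<lambda>n. ereal (root n (dnorm ((adj T ^^ n) \<phi>)))) \<le> ereal \<rho>"
    by (rule limsup_root_le_of_geometric_bound) (use r0 \<rho> in \<open>auto simp: M_def\<close>)
  then show "adj_local_spectral_radius T \<phi> \<le> ereal (adj_spectral_radius T) + ereal e"
    by (simp add: adj_local_spectral_radius_def \<rho>_def r_def)
qed

theorem theorem2p1:
  fixes T :: "'a::complex_banach \<Rightarrow> 'a"
  assumes T: "bounded_clinear_op T"
    and dense: "\<And>U. U \<noteq> {} \<Longrightarrow> openin (top_of_set (op_spectrum T)) U \<Longrightarrow>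
                  closure (glocal_subspace T (closure U)) = UNIV"
  shows "(\<forall>F. closed F \<and> F \<subset> adj_spectrum T \<longrightarrow> adj_glocal_subspace T F = {\<lambda>x. 0})
     \<and> (\<not> (\<exists>z. adj_spectrum T = {z}) \<longrightarrow> adj_point_spectrum T = {})
     \<and> adj_property_C T
     \<and> (\<forall>\<phi>\<in>cdual. \<phi> \<noteq> (\<lambda>x. 0) \<longrightarrow> adj_local_spectrum T \<phi> = adj_spectrum T)
     \<and> (\<forall>\<phi>\<in>cdual. \<phi> \<noteq> (\<lambda>x. 0) \<longrightarrow>
          adj_local_spectral_radius T \<phi> = ereal (adj_spectral_radius T))
     \<and> (\<forall>M. dsubspace M \<and> dclosed M \<and> M \<noteq> {\<lambda>x. 0} \<and>
           (\<forall>\<phi>\<in>M. adj T \<phi> \<in> M) \<longrightarrow>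
           adj_spectrum T \<subseteq> dspectrum_on M (adj T) \<and>
           dspectrum_on M (adj T) \<subseteq> full_spectrum (adj_spectrum T))"
proof -
  have D: "glocal_dense T" unfolding glocal_dense_def using dense by blast
  have radius: "adj_local_spectral_radius T \<phi> = ereal (adj_spectral_radius T)"
    if "\<phi> \<in> cdual" "\<phi> \<noteq> (\<lambda>x. 0)" for \<phi>
    using adj_local_spectral_radius_le[OF T D that] adj_spectral_radius_le_local[OF T D that]
    by (rule antisym)
  have invariant: "adj_spectrum T \<subseteq> dspectrum_on M (adj T) \<and>
      dspectrum_on M (adj T) \<subseteq> full_spectrum (adj_spectrum T)"
    if "dsubspace M \<and> dclosed M \<and> M \<noteq> {\<lambda>x. 0} \<and> (\<forall>\<phi>\<in>M. adj T \<phi> \<in> M)" for M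
    using invariant_subspace_spectrum_bounds[OF T D, of M] that by (simp add: adj_invariant_subspace_def)
  show ?thesis
    using adj_glocal_subspace_proper_eq_zero[OF T D] adj_point_spectrum_empty[OF T D]
      adj_property_C_holds[OF T D] adj_local_spectrum_eq[OF T D] radius invariant
    by (intro conjI allI ballI impI) auto
qed

end
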